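(* Let $(X,d)$ be a compact metric space and $f:X\to X$ continuous. Then $$h_{top}(f)=\lim_{\varepsilon\to0}\liminf_{n\to\infty}\frac{\log\log N_{\mathcal M}(n,\varepsilon)}{n}=\lim_{\varepsilon\to0}\liminf_{n\to\infty}\frac{\log\log N_{\mathcal K}(n,\varepsilon)}{n}.$$
   Context: $d_n(x,y)=\max_{0\le i\le n-1}d(f^ix,f^iy)$. $\mathcal M(X)$ is the set of Borel probability measures on $X$, $W_1^n(\mu,\nu)=\inf_\pi\int d_n\,d\pi$ over Borel probability measures on $X\times X$ with marginals $\mu,\nu$; $N_{\mathcal M}(n,\varepsilon)$ is the smallest cardinality of $E\subset\mathcal M(X)$ such that every $\mu\in\mathcal M(X)$ is within $W_1^n$-distance $\le\varepsilon$ of some element of $E$. $\mathcal K(X)$ is the space of nonempty closed subsets of $X$; $A^\varepsilon_n=\{x:d_n(x,A)<\varepsilon\}$, $H^n(B,C)=\inf\{\varepsilon>0:B\subset C^\varepsilon_n,C\subset B^\varepsilon_n\}$; $N_{\mathcal K}(n,\varepsilon)$ is the smallest cardinality of $\mathcal G\subset\mathcal K(X)$ such that every $B\in\mathcal K(X)$ is within $H^n$-distance $\le\varepsilon$ of some element of $\mathcal G$. Convention $\log0=0$. *)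

theory Defs
  imports "HOL-Analysis.Analysis" "HOL-Probability.Probability"
begin

text \<open>The compact metric space X is the (compact) universe of a metric_space type 'a.\<close>

definition dn :: "('a::metric_space \<Rightarrow> 'a) \<Rightarrow> nat \<Rightarrow> 'a \<Rightarrow> 'a \<Rightarrow> real" where
  "dn f n x y = Max {dist ((f ^^ i) x) ((f ^^ i) y) | i. i < n}"

definition probs :: "'a::metric_space measure set" where
  "probs = {\<mu>. prob_space \<mu> \<and> sets \<mu> = sets (borel :: 'a measure)}"

definition couplings :: "'a::metric_space measure \<Rightarrow> 'a measure \<Rightarrow> ('a \<times> 'a) measure set" where
  "couplings \<mu> \<nu> = {\<pi>. prob_space \<pi> \<and> sets \<pi> = sets (borel :: ('a \<times> 'a) measure)
      \<and> distr \<pi> borel fst = \<mu> \<and> distr \<pi> borel snd = \<nu>}"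

definition W1n :: "('a::metric_space \<Rightarrow> 'a) \<Rightarrow> nat \<Rightarrow> 'a measure \<Rightarrow> 'a measure \<Rightarrow> real" where
  "W1n f n \<mu> \<nu> = Inf {integral\<^sup>L \<pi> (\<lambda>p. dn f n (fst p) (snd p)) | \<pi>. \<pi> \<in> couplings \<mu> \<nu>}"

definition NM :: "('a::metric_space \<Rightarrow> 'a) \<Rightarrow> nat \<Rightarrow> real \<Rightarrow> nat" where
  "NM f n \<epsilon> = Inf {card E | E. finite E \<and> E \<subseteq> probs \<and>
       (\<forall>\<mu>\<in>probs. \<exists>\<nu>\<in>E. W1n f n \<mu> \<nu> \<le> \<epsilon>)}"

definition KX :: "'a::metric_space set set" where
  "KX = {A. A \<noteq> {} \<and> closed A}"

definition dn_set :: "('a::metric_space \<Rightarrow> 'a) \<Rightarrow> nat \<Rightarrow> 'a \<Rightarrow> 'a set \<Rightarrow> real" where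
  "dn_set f n x A = Inf {dn f n x a | a. a \<in> A}"

definition nbhd :: "('a::metric_space \<Rightarrow> 'a) \<Rightarrow> nat \<Rightarrow> real \<Rightarrow> 'a set \<Rightarrow> 'a set" where
  "nbhd f n \<epsilon> A = {x. dn_set f n x A < \<epsilon>}"

definition Hn :: "('a::metric_space \<Rightarrow> 'a) \<Rightarrow> nat \<Rightarrow> 'a set \<Rightarrow> 'a set \<Rightarrow> real" where
  "Hn f n B C = Inf {\<epsilon>. \<epsilon> > 0 \<and> B \<subseteq> nbhd f n \<epsilon> C \<and> C \<subseteq> nbhd f n \<epsilon> B}"

definition NK :: "('a::metric_space \<Rightarrow> 'a) \<Rightarrow> nat \<Rightarrow> real \<Rightarrow> nat" where
  "NK f n \<epsilon> = Inf {card G | G. finite G \<and> G \<subseteq> KX \<and>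
       (\<forall>B\<in>KX. \<exists>C\<in>G. Hn f n B C \<le> \<epsilon>)}"

definition span_num :: "('a::metric_space \<Rightarrow> 'a) \<Rightarrow> nat \<Rightarrow> real \<Rightarrow> nat" where
  "span_num f n \<epsilon> = Inf {card E | E. finite E \<and> (\<forall>x. \<exists>y\<in>E. dn f n x y \<le> \<epsilon>)}"

definition h_top :: "('a::metric_space \<Rightarrow> 'a) \<Rightarrow> ereal" where
  "h_top f = Lim (at_right 0)
     (\<lambda>\<epsilon>::real. limsup (\<lambda>n. ereal (ln (real (span_num f n \<epsilon>)) / real n)))"

end

theory Submission
  imports Defs "HOL-Real_Asymp.Real_Asymp"
begin

text \<open>
Write \<open>s(n,\<epsilon>)\<close> for the minimal cardinality of an \<open>(n,\<epsilon>)\<close>-spanning set, so that \<open>h_top f\<close> is the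
limit of \<open>limsup (ln s(n,\<epsilon>))/n\<close>. Minimal covers by sets of \<open>d\<^sub>n\<close>-diameter \<open>\<le> \<epsilon>\<close> are
submultiplicative in \<open>n\<close>, so by Fekete's lemma the limsup may be replaced by the liminf at the cost
of doubling \<open>\<epsilon>\<close>. It then suffices to squeeze \<open>ln ln N\<^sub>K\<close> and \<open>ln ln N\<^sub>M\<close> between \<open>ln s\<close> at
comparable scales, up to terms that are \<open>o(n)\<close>.

Closed sets: the nonempty subsets of an \<open>(n,\<epsilon>)\<close>-spanning set form an \<open>\<epsilon>\<close>-net of \<open>\<K>(X)\<close>, and
distinct nonempty subsets of an \<open>(n,3\<epsilon>)\<close>-separated set cannot share an \<open>\<epsilon>\<close>-approximant; hence
\<open>2^s(n,3\<epsilon>) - 1 \<le> N\<^sub>K(n,\<epsilon>) \<le> 2^s(n,\<epsilon>)\<close>.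

Measures: transporting a measure to an \<open>(n,\<epsilon>/2)\<close>-spanning set and rounding the weights down to
multiples of \<open>1/K\<close>, with \<open>K \<approx> 2 diam s/\<epsilon>\<close>, yields a \<open>W\<^sub>1\<^sup>n\<close>-net of size \<open>(K+1)^s\<close>. Conversely, split
an \<open>(n,64\<epsilon>)\<close>-separated set into \<open>k\<close> pairs; choosing one point from each pair according to a
subset \<open>S\<close> of the pairs gives a uniform measure \<open>\<mu>\<^sub>S\<close>, and two such measures within \<open>\<epsilon>\<close> of a
common measure differ in at most \<open>k/16\<close> choices. Hence \<open>N\<^sub>M \<ge> 2^k / #{A. 16|A| \<le> k} \<ge> e^{7k/16}\<close>.
\<close>

section \<open>Subadditive sequences and elementary estimates\<close>

lemma subadditive_mult_le:
  fixes a :: "nat \<Rightarrow> real"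
  assumes sub: "\<And>n m. 0 < n \<Longrightarrow> 0 < m \<Longrightarrow> a (n + m) \<le> a n + a m" and "0 < k" "0 < q"
  shows "a (q * k) \<le> q * a k"
  using \<open>0 < q\<close>
proof (induction q)
  case (Suc q)
  show ?case
  proof (cases "q = 0")
    case False
    then have "a (Suc q * k) \<le> a (q * k) + a k"
      using sub[of "q * k" k] \<open>0 < k\<close> by (simp add: add.commute)
    also have "\<dots> \<le> q * a k + a k" using Suc False by simp
    finally show ?thesis by (simp add: algebra_simps)
  qed simp
qed simp

lemma limsup_le_subadditive_ratio:
  fixes a :: "nat \<Rightarrow> real"
  assumes sub: "\<And>n m. 0 < n \<Longrightarrow> 0 < m \<Longrightarrow> a (n + m) \<le> a n + a m"
    and nonneg: "\<And>n. 0 \<le> a n" and "0 < k"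
  shows "limsup (\<lambda>n. ereal (a n / n)) \<le> ereal (a k / k)"
proof -
  define M where "M = Max (a ` {..<k})"
  have M: "a r \<le> M" if "r < k" for r unfolding M_def using that by (intro Max_ge) auto
  have M0: "0 \<le> M" using M[of 0] nonneg[of 0] \<open>0 < k\<close> by linarith
  have bound: "ereal (a n / n) \<le> ereal (a k / k + M / n)" if "n \<ge> k" for n
  proof -
    define q where "q = n div k"
    define r where "r = n mod k"
    have n: "n = q * k + r" unfolding q_def r_def by simp
    have q: "0 < q" unfolding q_def using that \<open>0<k\<close> by (simp add: div_greater_zero_iff)
    have r: "r < k" unfolding r_def using \<open>0<k\<close> by simp
    have an: "a n \<le> q * a k + M"
    proof (cases "r = 0")
      case True
      then show ?thesis using n subadditive_mult_le[OF sub \<open>0<k\<close> q] M0 by simp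
    next
      case False
      have "a n \<le> a (q * k) + a r" unfolding n using False q \<open>0<k\<close> by (intro sub) auto
      then show ?thesis using subadditive_mult_le[OF sub \<open>0<k\<close> q] M[OF r] by linarith
    qed
    have "real q * real k \<le> real n" using n by (metis le_add1 of_nat_le_iff of_nat_mult)
    then have "real q * a k \<le> real n * (a k / k)"
      using nonneg[of k] \<open>0<k\<close> mult_right_mono[of "real q * real k" "real n" "a k"]
      by (simp add: field_simps)
    then have "a n \<le> real n * (a k / k) + M" using an by linarith
    then have "a n / n \<le> a k / k + M / n" using that \<open>0<k\<close> by (simp add: field_simps)
    then show ?thesis by simp
  qed
  have "limsup (\<lambda>n. ereal (a n / n)) \<le> limsup (\<lambda>n. ereal (a k / k + M / n))"
    by (intro Limsup_mono eventually_sequentiallyI[of k]) (use bound in auto)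
  also have "\<dots> = ereal (a k / k)"
  proof (rule lim_imp_Limsup)
    have "(\<lambda>n. a k / k + M / real n) \<longlonglongrightarrow> a k / k + 0"
      by (intro tendsto_add tendsto_const lim_const_over_n)
    then show "(\<lambda>n. ereal (a k / k + M / real n)) \<longlonglongrightarrow> ereal (a k / k)"
      by (simp add: tendsto_ereal)
  qed simp
  finally show ?thesis .
qed

lemma limsup_le_liminf_subadditive:
  fixes a :: "nat \<Rightarrow> real"
  assumes "\<And>n m. 0 < n \<Longrightarrow> 0 < m \<Longrightarrow> a (n + m) \<le> a n + a m" and "\<And>n. 0 \<le> a n"
  shows "limsup (\<lambda>n. ereal (a n / n)) \<le> liminf (\<lambda>n. ereal (a n / n))"
proof -
  have "limsup (\<lambda>n. ereal (a n / n)) \<le> (INF k\<in>{0<..}. ereal (a k / k))"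
    by (rule INF_greatest) (use limsup_le_subadditive_ratio[OF assms] in auto)
  also have "\<dots> \<le> liminf (\<lambda>n. ereal (a n / n))"
    by (intro Liminf_bounded eventually_sequentiallyI[of 1]) (auto intro!: INF_lower)
  finally show ?thesis .
qed

lemma liminf_add_const_over_n:
  fixes x :: "nat \<Rightarrow> real"
  shows "liminf (\<lambda>n. ereal ((x n + c) / real n)) = liminf (\<lambda>n. ereal (x n / real n))"
proof -
  have eq: "(\<lambda>n. ereal ((x n + c) / real n)) = (\<lambda>n. ereal (c / real n) + ereal (x n / real n))"
    by (simp add: add_divide_distrib add.commute)
  have "(\<lambda>n. ereal (c / real n)) \<longlonglongrightarrow> ereal 0"
    by (intro tendsto_ereal lim_const_over_n)
  then show ?thesis unfolding eq by (subst ereal_liminf_lim_add[where a=0]) (auto simp: zero_ereal_def)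
qed

lemma ln_ln_le_of_le_power2:
  fixes N s :: nat
  assumes "1 \<le> s" "real N \<le> 2 ^ s"
  shows "ln (ln (real N)) \<le> ln (real s) + 1"
proof (cases "N \<le> 1")
  case True
  then have "N = 0 \<or> N = 1" by auto
  then show ?thesis using assms by auto
next
  case False
  then have N2: "2 \<le> real N" by auto
  have "ln (real N) \<le> ln (2 ^ s)" using assms N2 by (subst ln_le_cancel_iff) auto
  also have "\<dots> = real s * ln 2" by (simp add: ln_realpow)
  also have "\<dots> \<le> real s" using ln_2_less_1 assms by (simp add: mult_left_le)
  finally have le: "ln (real N) \<le> real s" .
  have "0 < ln (real N)" using N2 by auto
  then have "ln (ln (real N)) \<le> ln (real s)" using le by (subst ln_le_cancel_iff) auto
  then show ?thesis by simp
qed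


lemma exp_4_ge_10: "10 \<le> exp (4::real)"
proof -
  have "2 \<le> exp (1::real)" using exp_ge_add_one_self[of 1] by simp
  then have "(2::real)^4 \<le> exp 1 ^ 4" by (intro power_mono) auto
  also have "exp (1::real) ^ 4 = exp 4" by (simp flip: exp_of_nat_mult)
  finally show ?thesis by simp
qed

lemma ln_ln_nat_ge: "-4 \<le> ln (ln (real (N::nat)))"
proof (cases "N \<le> 1")
  case True
  then have "N = 0 \<or> N = 1" by auto
  then show ?thesis by auto
next
  case False
  then have "ln 2 \<le> ln (real N)" by (subst ln_le_cancel_iff) auto
  then have l: "2/3 \<le> ln (real N)" using ln2_ge_two_thirds by linarith
  have "exp (-4) \<le> (1/10::real)" using exp_4_ge_10 by (simp add: exp_minus field_simps)
  then have "exp (-4) \<le> ln (real N)" using l by linarith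
  then have "ln (exp (-4)) \<le> ln (ln (real N))" using l by (subst ln_le_cancel_iff) auto
  then show ?thesis by simp
qed

lemma ln_ln_ge_of_ln_ge:
  fixes m N :: nat
  assumes "1 \<le> m" and ln_ge: "2 \<le> m \<Longrightarrow> real m / 10 \<le> ln (real N)"
  shows "ln (real m) - 4 \<le> ln (ln (real N))"
proof (cases "m = 1")
  case True then show ?thesis using ln_ln_nat_ge[of N] by simp
next
  case False
  then have m2: "2 \<le> m" using assms by auto
  then have "ln (real m / 10) \<le> ln (ln (real N))" using ln_ge by (subst ln_le_cancel_iff) auto
  moreover have "ln (real m / 10) = ln (real m) - ln 10" using m2 by (simp add: ln_div)
  moreover have "ln (10::real) \<le> 4" using exp_4_ge_10 by (metis exp_le_cancel_iff exp_ln zero_less_numeral)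
  ultimately show ?thesis by linarith
qed

lemma ln_ge_of_pow2_minus_one_le:
  fixes m N :: nat
  assumes "2 \<le> m" "2 ^ m - 1 \<le> real N"
  shows "real m / 10 \<le> ln (real N)"
proof -
  have "(2::real) ^ m = 2 * 2 ^ (m - 1)" using assms(1) by (simp add: power_eq_if)
  then have pow: "(2::real) ^ (m - 1) \<le> real N" using assms(2) one_le_power[of "2::real" "m - 1"] by linarith
  have "real m / 10 \<le> real (m - 1) * (2/3)" using assms(1) by (simp add: of_nat_diff)
  also have "\<dots> \<le> real (m - 1) * ln 2" using ln2_ge_two_thirds by (intro mult_left_mono) auto
  also have "\<dots> = ln ((2::real) ^ (m - 1))" by (simp add: ln_realpow)
  also have "\<dots> \<le> ln (real N)"
  proof -
    have "0 < real N" using pow zero_less_power[of "2::real" "m - 1"] by linarith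
    then show ?thesis using pow by (subst ln_le_cancel_iff) auto
  qed
  finally show ?thesis .
qed
lemma card_small_subsets_le: "real (card {A. A \<subseteq> {..<k} \<and> 16 * card A \<le> k}) \<le> (17/16)^k * 16^(k div 16)"
proof -
  define r where "r = k div 16"
  have eq: "{A. A \<subseteq> {..<k} \<and> 16 * card A \<le> k} = (\<Union>j\<in>{..r}. {A. A \<subseteq> {..<k} \<and> card A = j})"
    unfolding r_def by auto
  have "card {A. A \<subseteq> {..<k} \<and> 16 * card A \<le> k} \<le> (\<Sum>j\<le>r. card {A. A \<subseteq> {..<k} \<and> card A = j})"
    unfolding eq by (rule card_UN_le) simp
  also have "\<dots> = (\<Sum>j\<le>r. k choose j)" by (intro sum.cong refl) (simp add: n_subsets)
  finally have c: "real (card {A. A \<subseteq> {..<k} \<and> 16 * card A \<le> k}) \<le> (\<Sum>j\<le>r. real (k choose j))"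
    by (simp flip: of_nat_sum)
  also have "\<dots> \<le> (\<Sum>j\<le>r. real (k choose j) * (1/16)^j * 16^r)"
  proof (intro sum_mono)
    fix j assume "j \<in> {..r}"
    then have jr: "j \<le> r" by simp
    have "(16::real)^r = 16^j * 16^(r - j)" using jr by (simp flip: power_add)
    then have "(1/16::real)^j * 16^r = 16^(r-j)" by (simp add: power_one_over)
    also have "\<dots> \<ge> 1" by simp
    finally show "real (k choose j) \<le> real (k choose j) * (1/16)^j * 16^r"
      by (simp add: mult.assoc mult_le_cancel_left1)
  qed
  also have "\<dots> \<le> (\<Sum>j\<le>k. real (k choose j) * (1/16)^j * 16^r)"
    by (intro sum_mono2) (auto simp: r_def)
  also have "\<dots> = 16^r * (\<Sum>j\<le>k. real (k choose j) * (1/16)^j * 1^(k - j))"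
    by (simp add: sum_distrib_left mult_ac)
  also have "(\<Sum>j\<le>k. real (k choose j) * (1/16)^j * 1^(k - j)) = (1/16 + 1)^k"
    by (rule binomial_ring[symmetric])
  finally show ?thesis unfolding r_def by (simp add: mult.commute)
qed


lemma ln_ge_of_pow2_le_small_subsets:
  fixes N :: real
  assumes "2 ^ k \<le> N * ((17/16)^k * 16^(k div 16))"
  shows "real k * (7/16) \<le> ln N"
proof -
  have pos: "0 < N * ((17/16)^k * 16^(k div 16))" using assms zero_less_power[of "2::real" k] by linarith
  moreover have "0 < (17/16::real)^k * 16^(k div 16)" by simp
  ultimately have N: "0 < N" by (simp add: zero_less_mult_iff)
  have "ln (2 ^ k) \<le> ln (N * ((17/16)^k * 16^(k div 16)))"
    using assms pos by (subst ln_le_cancel_iff) auto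
  then have "real k * ln 2 \<le> ln N + (real k * ln (17/16) + real (k div 16) * ln 16)"
    using N by (simp add: ln_mult_pos ln_realpow)
  moreover have "real k * ln (17/16) \<le> real k * (1/16)"
    using ln_add_one_self_le_self[of "1/16::real"] by (intro mult_left_mono) auto
  moreover have "real (k div 16) * ln 16 \<le> real k * ln 2 / 4"
  proof -
    have "real (k div 16) \<le> real k / 16" by linarith
    moreover have "ln (16::real) = 4 * ln 2" using ln_realpow[of 2 4] by simp
    ultimately show ?thesis by (simp add: mult_right_mono)
  qed
  moreover have "real k * (2/3) \<le> real k * ln 2"
    using ln2_ge_two_thirds by (intro mult_left_mono) auto
  ultimately show ?thesis by linarith
qed

lemma ln_of_nat_nonneg: "0 \<le> ln (real (m::nat))"
  by (cases m) auto

lemma frequently_less_of_liminf_less: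
  assumes "liminf (\<lambda>n. ereal (x n)) < ereal z"
  shows "\<exists>\<^sub>F n in sequentially. x n < z"
proof -
  obtain y where y: "y < ereal z" "\<not> eventually (\<lambda>n. y < ereal (x n)) sequentially"
    using assms le_Liminf_iff[of "ereal z" sequentially "\<lambda>n. ereal (x n)"] by (auto simp: not_le)
  then have "\<exists>\<^sub>F n in sequentially. \<not> y < ereal (x n)" by (simp add: not_eventually)
  then show ?thesis
  proof (rule frequently_elim1)
    fix n assume "\<not> y < ereal (x n)"
    then have "ereal (x n) < ereal z" using y(1) by (meson le_less_trans not_less)
    then show "x n < z" by simp
  qed
qed

lemma liminf_add_ln_le:
  fixes a :: "nat \<Rightarrow> real" and c :: real
  assumes a0: "\<And>n. 0 \<le> a n" and c: "1 \<le> c"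
  shows "liminf (\<lambda>n. ereal ((a n + ln (c + a n)) / real n)) \<le> liminf (\<lambda>n. ereal (a n / real n))"
proof (rule ccontr)
  assume "\<not> ?thesis"
  then have "liminf (\<lambda>n. ereal (a n / real n)) < liminf (\<lambda>n. ereal ((a n + ln (c + a n)) / real n))"
    by (simp add: not_le)
  then obtain z :: real where z: "liminf (\<lambda>n. ereal (a n / real n)) < z"
    and zb: "z < liminf (\<lambda>n. ereal ((a n + ln (c + a n)) / real n))"
    using ereal_dense2 by blast
  obtain b :: real where "ereal z < b" and b2: "b < liminf (\<lambda>n. ereal ((a n + ln (c + a n)) / real n))"
    using ereal_dense2[OF zb] by blast
  then have b1: "z < b" by simp
  have small: "\<exists>\<^sub>F n in sequentially. a n / real n < z" by (rule frequently_less_of_liminf_less[OF z])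
  have "0 < z" using frequently_ex[OF small] a0 by (meson divide_nonneg_nonneg le_less_trans of_nat_0_le_iff)
  then have "(\<lambda>n::nat. ln (c + z * real n) / real n) \<longlonglongrightarrow> 0" using c by real_asymp
  then have "eventually (\<lambda>n. ln (c + z * real n) / real n < b - z) sequentially"
    using b1 by (intro order_tendstoD(2)) auto
  moreover have "eventually (\<lambda>n. ereal b < ereal ((a n + ln (c + a n)) / real n)) sequentially"
    using b2 le_Liminf_iff[of "liminf (\<lambda>n. ereal ((a n + ln (c + a n)) / real n))" sequentially
        "\<lambda>n. ereal ((a n + ln (c + a n)) / real n)"] by auto
  ultimately obtain n where n: "a n / real n < z" "ln (c + z * real n) / real n < b - z"
    "ereal b < ereal ((a n + ln (c + a n)) / real n)" "0 < n"
    using frequently_ex[OF frequently_eventually_frequently[OF small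
          eventually_conj[OF eventually_gt_at_top[of 0] eventually_conj]]] by blast
  then have "a n < z * real n" by (simp add: field_simps)
  then have "ln (c + a n) / real n \<le> ln (c + z * real n) / real n"
    using a0[of n] c by (intro divide_right_mono) (auto simp: ln_le_cancel_iff)
  then have "(a n + ln (c + a n)) / real n < b" using n(1,2) by (simp add: add_divide_distrib)
  then show False using n(3) by simp
qed



section \<open>Couplings and finitely supported measures\<close>

definition unif01 :: "real measure" where "unif01 = uniform_measure lborel {0..1}"

lemma prob_space_unif01: "prob_space unif01"
  unfolding unif01_def by (rule prob_space_uniform_measure) auto

lemma sets_unif01[measurable_cong]: "sets unif01 = sets borel"
  unfolding unif01_def by simp

lemma space_unif01[simp]: "space unif01 = UNIV"
  using sets_eq_imp_space_eq[OF sets_unif01] by simp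

lemma measure_unif01_less:
  assumes "0 \<le> r" "r \<le> 1" shows "measure unif01 {u. u < r} = r"
proof -
  have eq: "{0..1} \<inter> {u. u < r} = {0..<r}" using assms by auto
  have "emeasure unif01 {u. u < r} = emeasure lborel ({0..1} \<inter> {u. u < r}) / emeasure lborel {0..1::real}"
    unfolding unif01_def by (rule emeasure_uniform_measure) auto
  also have "\<dots> = ennreal r" unfolding eq using assms by (simp add: divide_ennreal_def)
  finally show ?thesis unfolding measure_def using assms by simp
qed

lemma measure_unif01_ge:
  assumes "0 \<le> r" "r \<le> 1" shows "measure unif01 {u. \<not> u < r} = 1 - r"
proof -
  interpret prob_space unif01 by (rule prob_space_unif01)
  have "{u. \<not> u < r} = space unif01 - {u. u < r}" by auto
  moreover have "{u::real. u < r} \<in> sets unif01" unfolding sets_unif01 by measurable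
  ultimately show ?thesis using prob_compl[of "{u. u < r}"] measure_unif01_less[OF assms] by simp
qed

lemma distr_pair_snd_prob:
  assumes "prob_space N" "sigma_finite_measure M"
  shows "distr (N \<Otimes>\<^sub>M M) M snd = M"
proof (intro measure_eqI)
  interpret N: prob_space N by fact
  interpret M: sigma_finite_measure M by fact
  fix A assume A: "A \<in> sets (distr (N \<Otimes>\<^sub>M M) M snd)"
  then have "emeasure (distr (N \<Otimes>\<^sub>M M) M snd) A = emeasure (N \<Otimes>\<^sub>M M) (space N \<times> A)"
    by (auto simp: emeasure_distr space_pair_measure dest: sets.sets_into_space
        intro!: arg_cong2[where f=emeasure])
  with A show "emeasure (distr (N \<Otimes>\<^sub>M M) M snd) A = emeasure M A"
    by (simp add: M.emeasure_pair_measure_Times N.emeasure_space_1)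
qed simp

lemma sets_borel_singleton: "{z} \<in> sets (borel :: 'a::metric_space measure)"
  by (rule borel_closed) simp

lemma emeasure_eq_sum_finite_support:
  fixes \<nu> :: "'a::metric_space measure"
  assumes "sets \<nu> = sets borel" "finite S" "emeasure \<nu> (UNIV - S) = 0" "A \<in> sets \<nu>"
  shows "emeasure \<nu> A = (\<Sum>z\<in>A \<inter> S. emeasure \<nu> {z})"
proof -
  have S: "S \<in> sets \<nu>" using assms(1,2) by (simp add: finite_imp_closed)
  have "UNIV - S \<in> sets \<nu>" using assms(1,2) by (simp add: finite_imp_closed open_Diff)
  then have "emeasure \<nu> (A - S) = 0"
    using assms(3,4) by (metis Diff_mono emeasure_eq_0 order_refl top_greatest)
  then have "emeasure \<nu> A = emeasure \<nu> (A \<inter> S)"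
    using S assms(4) emeasure_Diff_null_set[of "A - S" \<nu> A] by (simp add: Diff_Diff_Int null_setsI)
  also have "\<dots> = (\<Sum>z\<in>A \<inter> S. emeasure \<nu> {z})"
    using assms(1,2) sets_borel_singleton by (intro emeasure_eq_sum_singleton) auto
  finally show ?thesis .
qed

lemma probs_eq_finite_supportI:
  assumes "\<nu>1 \<in> probs" "\<nu>2 \<in> probs" "finite S"
    and "emeasure \<nu>1 (UNIV - S) = 0" "emeasure \<nu>2 (UNIV - S) = 0"
    and "\<And>z. z \<in> S \<Longrightarrow> measure \<nu>1 {z} = measure \<nu>2 {z}"
  shows "\<nu>1 = \<nu>2"
proof (rule measure_eqI)
  have fin: "finite_measure \<nu>1" "finite_measure \<nu>2"
    using assms(1,2) unfolding probs_def by (auto intro: prob_space.finite_measure)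
  have sets: "sets \<nu>1 = sets borel" "sets \<nu>2 = sets borel" using assms(1,2) unfolding probs_def by auto
  then show "sets \<nu>1 = sets \<nu>2" by simp
  have point: "emeasure \<nu>1 {z} = emeasure \<nu>2 {z}" if "z \<in> S" for z
  proof -
    have "emeasure \<nu>1 {z} = ennreal (measure \<nu>1 {z})" by (rule finite_measure.emeasure_eq_measure[OF fin(1)])
    also have "\<dots> = ennreal (measure \<nu>2 {z})" using assms(6)[OF that] by (rule arg_cong)
    also have "\<dots> = emeasure \<nu>2 {z}" by (rule finite_measure.emeasure_eq_measure[OF fin(2), symmetric])
    finally show ?thesis .
  qed
  fix A assume A: "A \<in> sets \<nu>1"
  then have A2: "A \<in> sets \<nu>2" using sets by simp
  have "emeasure \<nu>1 A = (\<Sum>z\<in>A \<inter> S. emeasure \<nu>1 {z})"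
    by (rule emeasure_eq_sum_finite_support[OF sets(1) assms(3,4) A])
  also have "\<dots> = (\<Sum>z\<in>A \<inter> S. emeasure \<nu>2 {z})" by (rule sum.cong[OF refl]) (simp add: point)
  also have "\<dots> = emeasure \<nu>2 A"
    by (rule emeasure_eq_sum_finite_support[OF sets(2) assms(3,5) A2, symmetric])
  finally show "emeasure \<nu>1 A = emeasure \<nu>2 A" .
qed

lemma measurable_fst_borel: "fst \<in> (borel :: ('a::topological_space \<times> 'b::topological_space) measure) \<rightarrow>\<^sub>M borel"
  by (intro borel_measurable_continuous_onI continuous_intros)

lemma measurable_snd_borel: "snd \<in> (borel :: ('a::topological_space \<times> 'b::topological_space) measure) \<rightarrow>\<^sub>M borel"
  by (intro borel_measurable_continuous_onI continuous_intros)

lemma couplings_distr_pmf_nonempty: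
  fixes g :: "'b::countable \<Rightarrow> 'a::metric_space"
  assumes "\<nu> \<in> probs"
  shows "couplings (distr (measure_pmf p) borel g) \<nu> \<noteq> {}"
proof -
  have P\<nu>: "prob_space \<nu>" and s\<nu>: "sets \<nu> = sets borel" using assms probs_def by auto
  define M where "M = measure_pmf p \<Otimes>\<^sub>M \<nu>"
  have PM: "prob_space M" unfolding M_def by (intro prob_space_pair prob_space_measure_pmf P\<nu>)
  have fst_m: "fst \<in> M \<rightarrow>\<^sub>M count_space UNIV"
    using measurable_fst[of "measure_pmf p" \<nu>] unfolding M_def
    by (simp add: measurable_cong_sets[OF refl sets_measure_pmf_count_space])
  have snd_m: "snd \<in> M \<rightarrow>\<^sub>M borel"
    using measurable_snd[of "measure_pmf p" \<nu>] unfolding M_def by (simp add: measurable_cong_sets[OF refl s\<nu>])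
  define h where "h q = (g (fst q), snd q)" for q :: "'b \<times> 'a"
  have "(\<lambda>q. (c, snd q)) \<in> M \<rightarrow>\<^sub>M (borel :: ('a \<times> 'a) measure)" for c
    using measurable_compose[OF snd_m, of "Pair c"] by (simp add: borel_measurable_continuous_onI continuous_intros)
  from measurable_compose_countable[OF this fst_m]
  have h_m: "h \<in> M \<rightarrow>\<^sub>M borel" unfolding h_def by simp
  have g_m: "g \<in> measure_pmf p \<rightarrow>\<^sub>M borel" by simp
  have "distr M borel h \<in> couplings (distr (measure_pmf p) borel g) \<nu>"
    unfolding couplings_def
  proof (intro CollectI conjI)
    show "prob_space (distr M borel h)" by (rule prob_space.prob_space_distr[OF PM h_m])
    have "distr (distr M borel h) borel fst = distr M borel (g \<circ> fst)"
      by (simp add: distr_distr[OF measurable_fst_borel h_m] h_def comp_def)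
    also have "\<dots> = distr (distr M (measure_pmf p) fst) borel g"
      by (rule distr_distr[symmetric, OF g_m]) (unfold M_def, rule measurable_fst)
    also have "distr M (measure_pmf p) fst = measure_pmf p"
      unfolding M_def by (rule prob_space.distr_pair_fst[OF P\<nu>])
    finally show "distr (distr M borel h) borel fst = distr (measure_pmf p) borel g" .
    have "distr (distr M borel h) borel snd = distr M \<nu> snd"
      by (simp add: distr_distr[OF measurable_snd_borel h_m] h_def comp_def distr_cong[OF refl s\<nu>[symmetric]])
    also have "\<dots> = \<nu>"
      unfolding M_def by (intro distr_pair_snd_prob prob_space_measure_pmf prob_space_imp_sigma_finite P\<nu>)
    finally show "distr (distr M borel h) borel snd = \<nu>" .
  qed simp
  then show ?thesis by auto
qed

lemma measure_coupling_point_escape: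
  fixes \<mu> \<nu> :: "'a::metric_space measure"
  assumes "\<pi> \<in> couplings \<mu> \<nu>" "U \<in> sets borel"
  shows "measure \<mu> {c} - measure \<nu> U \<le> measure \<pi> ({c} \<times> (UNIV - U))"
proof -
  have P: "prob_space \<pi>" and s\<pi>: "sets \<pi> = sets borel" and marg: "distr \<pi> borel fst = \<mu>" "distr \<pi> borel snd = \<nu>"
    using assms(1) unfolding couplings_def by auto
  interpret prob_space \<pi> by (rule P)
  have sp: "space \<pi> = UNIV" using sets_eq_imp_space_eq[OF s\<pi>] by simp
  have fst_m: "fst \<in> \<pi> \<rightarrow>\<^sub>M borel" and snd_m: "snd \<in> \<pi> \<rightarrow>\<^sub>M borel"
    using measurable_fst_borel measurable_snd_borel by (auto simp: measurable_cong_sets[OF s\<pi> refl])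
  have fst_pre: "fst -` {c} \<inter> space \<pi> = {c} \<times> UNIV" and snd_pre: "snd -` U \<inter> space \<pi> = UNIV \<times> U"
    using sp by auto
  have ev: "{c} \<times> UNIV \<in> events" "UNIV \<times> U \<in> events"
    using measurable_sets[OF fst_m sets_borel_singleton, of c] measurable_sets[OF snd_m assms(2)]
    unfolding fst_pre snd_pre by auto
  moreover have "{c} \<times> (UNIV - U) = {c} \<times> UNIV - UNIV \<times> U" by auto
  ultimately have ev': "{c} \<times> (UNIV - U) \<in> events" by (metis sets.Diff)
  have "measure \<mu> {c} = prob ({c} \<times> UNIV)"
    using measure_distr[OF fst_m sets_borel_singleton, of c] marg(1) fst_pre by simp
  also have "\<dots> \<le> prob ({c} \<times> (UNIV - U) \<union> UNIV \<times> U)"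
    using ev ev' by (intro finite_measure_mono) auto
  also have "\<dots> \<le> prob ({c} \<times> (UNIV - U)) + prob (UNIV \<times> U)"
    using ev ev' by (intro measure_Un_le) auto
  also have "prob (UNIV \<times> U) = measure \<nu> U"
    using measure_distr[OF snd_m assms(2)] marg(2) snd_pre by simp
  finally show ?thesis by simp
qed

section \<open>Bowen metrics\<close>

lemma dn_eq: "dn f n x y = Max ((\<lambda>i. dist ((f ^^ i) x) ((f ^^ i) y)) ` {..<n})"
proof -
  have "{dist ((f ^^ i) x) ((f ^^ i) y) | i. i < n} = (\<lambda>i. dist ((f ^^ i) x) ((f ^^ i) y)) ` {..<n}"
    by auto
  then show ?thesis unfolding dn_def by simp
qed

lemma dn_ge: "i < n \<Longrightarrow> dist ((f ^^ i) x) ((f ^^ i) y) \<le> dn f n x y"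
  unfolding dn_eq by (rule Max_ge) auto

lemma dn_le_iff: "0 < n \<Longrightarrow> dn f n x y \<le> c \<longleftrightarrow> (\<forall>i<n. dist ((f ^^ i) x) ((f ^^ i) y) \<le> c)"
  unfolding dn_eq by (subst Max_le_iff) auto

lemma dn_nonneg: "0 < n \<Longrightarrow> 0 \<le> dn f n x y"
  using dn_ge[of 0 n f x y] by simp (meson order_trans zero_le_dist)

lemma dn_self [simp]: "0 < n \<Longrightarrow> dn f n x x = 0"
  using dn_le_iff[of n f x x 0] dn_nonneg[of n f x x] by auto

lemma dn_sym: "dn f n x y = dn f n y x"
  unfolding dn_eq by (simp add: dist_commute)

lemma dn_triangle: "0 < n \<Longrightarrow> dn f n x z \<le> dn f n x y + dn f n y z"
  unfolding dn_le_iff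
proof (intro allI impI)
  fix i assume "0 < n" "i < n"
  have "dist ((f ^^ i) x) ((f ^^ i) z) \<le> dist ((f ^^ i) x) ((f ^^ i) y) + dist ((f ^^ i) y) ((f ^^ i) z)"
    by (rule dist_triangle)
  also have "\<dots> \<le> dn f n x y + dn f n y z"
    using dn_ge[OF \<open>i<n\<close>] by (intro add_mono) auto
  finally show "dist ((f ^^ i) x) ((f ^^ i) z) \<le> dn f n x y + dn f n y z" .
qed

lemma dn_add:
  assumes "0 < n" "0 < m"
  shows "dn f (n + m) x y = max (dn f n x y) (dn f m ((f ^^ n) x) ((f ^^ n) y))"
proof -
  let ?g = "\<lambda>i. dist ((f ^^ i) x) ((f ^^ i) y)"
  have split: "{..<n + m} = {..<n} \<union> (\<lambda>j. j + n) ` {..<m}"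
  proof (intro equalityI subsetI)
    fix i assume "i \<in> {..<n + m}"
    then show "i \<in> {..<n} \<union> (\<lambda>j. j + n) ` {..<m}"
      by (cases "i < n") (auto intro!: image_eqI[of _ _ "i - n"])
  qed auto
  have shift: "?g ` (\<lambda>j. j + n) ` {..<m} = (\<lambda>j. dist ((f ^^ j) ((f ^^ n) x)) ((f ^^ j) ((f ^^ n) y))) ` {..<m}"
    by (simp add: image_image funpow_add)
  show ?thesis
    unfolding dn_eq split image_Un shift using assms by (subst Max_Un) auto
qed
locale compact_dynamics =
  fixes f :: "'a::metric_space \<Rightarrow> 'a"
  assumes cpt: "compact (UNIV :: 'a set)"
    and cont: "continuous_on UNIV f"
begin

lemma continuous_on_funpow: "continuous_on UNIV (f ^^ i)"
proof (induction i)
  case 0 then show ?case by (simp add: continuous_on_id)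
next
  case (Suc i)
  have "continuous_on UNIV (f \<circ> (f ^^ i))"
    by (rule continuous_on_compose[OF Suc]) (use cont continuous_on_subset in blast)
  then show ?case by (simp add: comp_def)
qed

lemma continuous_on_dn: "continuous_on UNIV (\<lambda>p. dn f n (fst p) (snd p))"
proof (cases n)
  case 0 then show ?thesis by (simp add: dn_eq)
next
  case (Suc k)
  have gi: "continuous_on UNIV (\<lambda>p. dist ((f ^^ i) (fst p)) ((f ^^ i) (snd p)))" for i
    by (intro continuous_on_dist continuous_on_compose2[OF continuous_on_funpow] continuous_on_fst continuous_on_snd continuous_on_id) auto
  have "continuous_on UNIV (\<lambda>p. Max ((\<lambda>i. dist ((f ^^ i) (fst p)) ((f ^^ i) (snd p))) ` {..<Suc k}))"
  proof (induction k)
    case 0 then show ?case using gi[of 0] by (simp add: lessThan_Suc)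
  next
    case (Suc k)
    have eq: "(\<lambda>p. Max ((\<lambda>i. dist ((f ^^ i) (fst p)) ((f ^^ i) (snd p))) ` {..<Suc (Suc k)}))
       = (\<lambda>p. max (dist ((f ^^ Suc k) (fst p)) ((f ^^ Suc k) (snd p)))
            (Max ((\<lambda>i. dist ((f ^^ i) (fst p)) ((f ^^ i) (snd p))) ` {..<Suc k})))"
      by (simp add: lessThan_Suc image_insert del: funpow.simps)
    show ?case unfolding eq by (intro continuous_on_max gi Suc)
  qed
  then show ?thesis using Suc by (simp add: dn_eq)
qed

lemma continuous_on_dn_left: "continuous_on UNIV (\<lambda>x. dn f n x y)"
proof -
  have "continuous_on UNIV ((\<lambda>p. dn f n (fst p) (snd p)) \<circ> (\<lambda>x. (x, y)))"
    by (intro continuous_on_compose continuous_intros) (use continuous_on_dn continuous_on_subset in blast)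
  then show ?thesis by (simp add: comp_def)
qed

lemma continuous_on_dn_right: "continuous_on UNIV (\<lambda>y. dn f n x y)"
  using continuous_on_dn_left[of n x] by (simp add: dn_sym)

definition diam :: real where "diam = diameter (UNIV :: 'a set)"

lemma dn_le_diam: "0 < n \<Longrightarrow> dn f n x y \<le> diam"
  unfolding dn_le_iff diam_def
  using compact_imp_bounded[OF cpt] by (auto intro: diameter_bounded_bound)

lemma diam_nonneg: "0 \<le> diam"
  using dn_le_diam[of 1 undefined undefined] by simp


section \<open>Spanning sets and topological entropy\<close>

definition spanning :: "nat \<Rightarrow> real \<Rightarrow> 'a set \<Rightarrow> bool" where
  "spanning n \<epsilon> E \<longleftrightarrow> finite E \<and> (\<forall>x. \<exists>y\<in>E. dn f n x y \<le> \<epsilon>)"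

lemma span_num_eq: "span_num f n \<epsilon> = Inf {card E | E. spanning n \<epsilon> E}"
  unfolding span_num_def spanning_def by simp

lemma spanning_exists:
  assumes "0 < n" "0 < \<epsilon>" shows "\<exists>E. spanning n \<epsilon> E"
proof -
  have op: "open {x. dn f n x y < \<epsilon>}" for y
    by (rule open_Collect_less[OF continuous_on_dn_left continuous_on_const])
  have cover: "UNIV \<subseteq> \<Union> ((\<lambda>y. {x. dn f n x y < \<epsilon>}) ` UNIV)"
    using assms by auto
  obtain C where "finite C" "UNIV \<subseteq> \<Union> ((\<lambda>y. {x. dn f n x y < \<epsilon>}) ` C)"
    by (rule compactE_image[OF cpt, of UNIV "\<lambda>y. {x. dn f n x y < \<epsilon>}", OF op cover]) blast
  then show ?thesis unfolding spanning_def by (intro exI[of _ C]) (auto intro: less_imp_le)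
qed

lemma span_num_attained:
  assumes "0 < n" "0 < \<epsilon>" obtains E where "spanning n \<epsilon> E" "card E = span_num f n \<epsilon>"
proof -
  have "{card E | E. spanning n \<epsilon> E} \<noteq> {}" using spanning_exists[OF assms] by auto
  from Inf_nat_def1[OF this] show ?thesis using that unfolding span_num_eq by auto
qed

lemma span_num_le: "spanning n \<epsilon> E \<Longrightarrow> span_num f n \<epsilon> \<le> card E"
  unfolding span_num_eq by (rule cInf_lower) auto

lemma spanning_nonempty: "spanning n \<epsilon> E \<Longrightarrow> E \<noteq> {}"
  unfolding spanning_def by auto

lemma span_num_pos: assumes "0 < n" "0 < \<epsilon>" shows "1 \<le> span_num f n \<epsilon>"
proof -
  obtain E where "spanning n \<epsilon> E" "card E = span_num f n \<epsilon>" using span_num_attained[OF assms] .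
  then show ?thesis using spanning_nonempty[of n \<epsilon> E] unfolding spanning_def
    by (metis One_nat_def Suc_leI card_gt_0_iff)
qed

lemma spanning_mono: "spanning n \<epsilon> E \<Longrightarrow> \<epsilon> \<le> \<epsilon>' \<Longrightarrow> spanning n \<epsilon>' E"
  unfolding spanning_def by (meson order_trans)

lemma span_num_antimono: assumes "0 < n" "0 < \<epsilon>" "\<epsilon> \<le> \<epsilon>'"
  shows "span_num f n \<epsilon>' \<le> span_num f n \<epsilon>"
proof -
  obtain E where "spanning n \<epsilon> E" "card E = span_num f n \<epsilon>" using span_num_attained[OF assms(1,2)] .
  then show ?thesis using span_num_le spanning_mono assms(3) by metis
qed

definition covering :: "nat \<Rightarrow> real \<Rightarrow> 'a set set \<Rightarrow> bool" where
  "covering n \<epsilon> A \<longleftrightarrow> finite A \<and> \<Union>A = UNIV \<and> (\<forall>B\<in>A. \<forall>x\<in>B. \<forall>y\<in>B. dn f n x y \<le> \<epsilon>)"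

definition cover_num :: "nat \<Rightarrow> real \<Rightarrow> nat" where
  "cover_num n \<epsilon> = Inf {card A | A. covering n \<epsilon> A}"

lemma cover_num_le: "covering n \<epsilon> A \<Longrightarrow> cover_num n \<epsilon> \<le> card A"
  unfolding cover_num_def by (rule cInf_lower) auto

lemma covering_from_spanning:
  assumes "0 < n" "spanning n \<epsilon> E"
  shows "covering n (2*\<epsilon>) ((\<lambda>y. {x. dn f n x y \<le> \<epsilon>}) ` E)"
  unfolding covering_def
proof (intro conjI ballI)
  show "finite ((\<lambda>y. {x. dn f n x y \<le> \<epsilon>}) ` E)" using assms unfolding spanning_def by auto
  show "\<Union> ((\<lambda>y. {x. dn f n x y \<le> \<epsilon>}) ` E) = UNIV" using assms unfolding spanning_def by auto
  fix B x z assume "B \<in> (\<lambda>y. {x. dn f n x y \<le> \<epsilon>}) ` E" "x \<in> B" "z \<in> B"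
  then obtain y where "dn f n x y \<le> \<epsilon>" "dn f n z y \<le> \<epsilon>" by auto
  then show "dn f n x z \<le> 2 * \<epsilon>"
    using dn_triangle[OF assms(1), where f=f and x=x and y=y and z=z] dn_sym[where f=f and n=n and x=z and y=y] by linarith
qed

lemma cover_num_double_le_span_num: assumes "0 < n" "0 < \<epsilon>" shows "cover_num n (2*\<epsilon>) \<le> span_num f n \<epsilon>"
proof -
  obtain E where E: "spanning n \<epsilon> E" "card E = span_num f n \<epsilon>" using span_num_attained[OF assms] .
  have "cover_num n (2*\<epsilon>) \<le> card ((\<lambda>y. {x. dn f n x y \<le> \<epsilon>}) ` E)"
    by (rule cover_num_le[OF covering_from_spanning[OF assms(1) E(1)]])
  also have "\<dots> \<le> card E" using E(1) unfolding spanning_def by (intro card_image_le) auto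
  finally show ?thesis using E by simp
qed

lemma covering_exists: assumes "0 < n" "0 < \<epsilon>" shows "\<exists>A. covering n \<epsilon> A"
proof -
  obtain E where "spanning n (\<epsilon>/2) E" using spanning_exists[of n "\<epsilon>/2"] assms by auto
  from covering_from_spanning[OF assms(1) this] show ?thesis by auto
qed

lemma cover_num_attained:
  assumes "0 < n" "0 < \<epsilon>" obtains A where "covering n \<epsilon> A" "card A = cover_num n \<epsilon>"
proof -
  have "{card A | A. covering n \<epsilon> A} \<noteq> {}" using covering_exists[OF assms] by auto
  from Inf_nat_def1[OF this] show ?thesis using that unfolding cover_num_def by auto
qed

lemma cover_num_pos: assumes "0 < n" "0 < \<epsilon>" shows "1 \<le> cover_num n \<epsilon>"
proof -
  obtain A where A: "covering n \<epsilon> A" "card A = cover_num n \<epsilon>" using cover_num_attained[OF assms] .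
  then have "A \<noteq> {}" unfolding covering_def by auto
  then show ?thesis using A unfolding covering_def by (metis One_nat_def Suc_leI card_gt_0_iff)
qed

lemma span_num_le_cover_num: assumes "0 < n" "0 < \<epsilon>" shows "span_num f n \<epsilon> \<le> cover_num n \<epsilon>"
proof -
  obtain A where A: "covering n \<epsilon> A" "card A = cover_num n \<epsilon>" using cover_num_attained[OF assms] .
  define E where "E = (\<lambda>B. SOME x. x \<in> B) ` {B\<in>A. B \<noteq> {}}"
  have fin: "finite A" using A unfolding covering_def by auto
  have "spanning n \<epsilon> E" unfolding spanning_def
  proof (intro conjI allI)
    show "finite E" unfolding E_def using fin by auto
    fix x
    obtain B where B: "B \<in> A" "x \<in> B" using A unfolding covering_def by blast
    then have "(SOME x. x \<in> B) \<in> B" by (meson someI)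
    then show "\<exists>y\<in>E. dn f n x y \<le> \<epsilon>" using A B unfolding E_def covering_def by blast
  qed
  then have "span_num f n \<epsilon> \<le> card E" by (rule span_num_le)
  also have "\<dots> \<le> card {B\<in>A. B \<noteq> {}}" unfolding E_def by (rule card_image_le) (use fin in auto)
  also have "\<dots> \<le> card A" using fin by (intro card_mono) auto
  finally show ?thesis using A by simp
qed

lemma cover_num_add_le: assumes "0 < n" "0 < m" "0 < \<epsilon>"
  shows "cover_num (n + m) \<epsilon> \<le> cover_num n \<epsilon> * cover_num m \<epsilon>"
proof -
  obtain A1 where A1: "covering n \<epsilon> A1" "card A1 = cover_num n \<epsilon>" using cover_num_attained assms by metis
  obtain A2 where A2: "covering m \<epsilon> A2" "card A2 = cover_num m \<epsilon>" using cover_num_attained assms by metis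
  define A where "A = (\<lambda>(B, C). B \<inter> (f ^^ n) -` C) ` (A1 \<times> A2)"
  have fin: "finite A1" "finite A2" using A1 A2 unfolding covering_def by auto
  have "covering (n+m) \<epsilon> A" unfolding covering_def
  proof (intro conjI ballI)
    show "finite A" unfolding A_def using fin by auto
    show "\<Union> A = UNIV"
    proof safe
      fix x :: 'a
      obtain B where "B \<in> A1" "x \<in> B" using A1 unfolding covering_def by blast
      moreover obtain C where "C \<in> A2" "(f ^^ n) x \<in> C" using A2 unfolding covering_def by blast
      ultimately show "x \<in> \<Union> A" unfolding A_def by blast
    qed auto
    fix S x y assume "S \<in> A" "x \<in> S" "y \<in> S"
    then obtain B C where "B \<in> A1" "C \<in> A2" "x \<in> B" "y \<in> B" "(f^^n) x \<in> C" "(f^^n) y \<in> C"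
      unfolding A_def by auto
    then have "dn f n x y \<le> \<epsilon>" "dn f m ((f^^n) x) ((f^^n) y) \<le> \<epsilon>"
      using A1 A2 unfolding covering_def by auto
    then show "dn f (n + m) x y \<le> \<epsilon>" using dn_add[OF assms(1,2), where f=f and x=x and y=y] by simp
  qed
  then have "cover_num (n+m) \<epsilon> \<le> card A" by (rule cover_num_le)
  also have "\<dots> \<le> card (A1 \<times> A2)" unfolding A_def by (rule card_image_le) (use fin in auto)
  also have "\<dots> = cover_num n \<epsilon> * cover_num m \<epsilon>" using A1 A2 by (simp add: card_cartesian_product)
  finally show ?thesis .
qed

definition upper_rate :: "real \<Rightarrow> ereal" where
  "upper_rate \<epsilon> = limsup (\<lambda>n. ereal (ln (real (span_num f n \<epsilon>)) / real n))"

definition lower_rate :: "real \<Rightarrow> ereal" where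
  "lower_rate \<epsilon> = liminf (\<lambda>n. ereal (ln (real (span_num f n \<epsilon>)) / real n))"

lemma ereal_ln_div_mono: "1 \<le> a \<Longrightarrow> a \<le> b \<Longrightarrow> ereal (ln (real a) / real n) \<le> ereal (ln (real b) / real n)"
  by (auto intro!: divide_right_mono)

lemma upper_rate_antimono: "0 < \<epsilon> \<Longrightarrow> \<epsilon> \<le> \<epsilon>' \<Longrightarrow> upper_rate \<epsilon>' \<le> upper_rate \<epsilon>"
  unfolding upper_rate_def
  by (intro Limsup_mono eventually_sequentiallyI[of 1] ereal_ln_div_mono span_num_antimono span_num_pos) auto

lemma lower_rate_le_upper_rate: "lower_rate \<epsilon> \<le> upper_rate \<epsilon>"
  unfolding lower_rate_def upper_rate_def by (rule Liminf_le_Limsup) simp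

lemma upper_rate_le_Sup: "0 < \<epsilon> \<Longrightarrow> upper_rate \<epsilon> \<le> (SUP \<delta>\<in>{0<..}. upper_rate \<delta>)"
  by (rule SUP_upper) auto
lemma upper_rate_double_le_lower_rate: assumes "0 < \<epsilon>" shows "upper_rate (2*\<epsilon>) \<le> lower_rate \<epsilon>"
proof -
  define a where "a n = ln (real (cover_num n (2*\<epsilon>)))" for n
  have e2: "0 < 2*\<epsilon>" using assms by simp
  have "upper_rate (2*\<epsilon>) \<le> limsup (\<lambda>n. ereal (a n / n))"
    unfolding upper_rate_def a_def
    by (intro Limsup_mono eventually_sequentiallyI[of 1] ereal_ln_div_mono span_num_le_cover_num span_num_pos e2) auto
  also have "\<dots> \<le> liminf (\<lambda>n. ereal (a n / n))"
  proof (rule limsup_le_liminf_subadditive)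
    fix n m :: nat assume nm: "0 < n" "0 < m"
    have "real (cover_num (n+m) (2*\<epsilon>)) \<le> real (cover_num n (2*\<epsilon>)) * real (cover_num m (2*\<epsilon>))"
      using cover_num_add_le[OF nm e2] by (metis of_nat_le_iff of_nat_mult)
    moreover have "1 \<le> real (cover_num (n+m) (2*\<epsilon>))" "1 \<le> real (cover_num n (2*\<epsilon>))" "1 \<le> real (cover_num m (2*\<epsilon>))"
      using cover_num_pos nm e2 by auto
    ultimately have "ln (real (cover_num (n+m) (2*\<epsilon>))) \<le> ln (real (cover_num n (2*\<epsilon>)) * real (cover_num m (2*\<epsilon>)))"
      by (subst ln_le_cancel_iff) auto
    also have "\<dots> = ln (real (cover_num n (2*\<epsilon>))) + ln (real (cover_num m (2*\<epsilon>)))"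
      using \<open>1 \<le> real (cover_num n (2*\<epsilon>))\<close> \<open>1 \<le> real (cover_num m (2*\<epsilon>))\<close> by (intro ln_mult_pos) auto
    finally show "a (n + m) \<le> a n + a m" unfolding a_def .
  next
    fix n show "0 \<le> a n" unfolding a_def by (cases "cover_num n (2*\<epsilon>) = 0") auto
  qed
  also have "\<dots> \<le> lower_rate \<epsilon>"
    unfolding lower_rate_def a_def
    by (intro Liminf_mono eventually_sequentiallyI[of 1] ereal_ln_div_mono cover_num_double_le_span_num cover_num_pos e2 assms) auto
  finally show ?thesis .
qed


lemma upper_rate_tendsto: "(upper_rate \<longlongrightarrow> (SUP \<delta>\<in>{0<..}. upper_rate \<delta>)) (at_right 0)"
proof (rule order_tendstoI)
  fix a assume "a < (SUP \<delta>\<in>{0<..}. upper_rate \<delta>)"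
  then obtain \<epsilon>0 where e0: "0 < \<epsilon>0" "a < upper_rate \<epsilon>0" by (auto simp: less_SUP_iff)
  show "\<forall>\<^sub>F x in at_right 0. a < upper_rate x"
    unfolding eventually_at_right[OF e0(1)]
    using e0 upper_rate_antimono by (intro exI[of _ \<epsilon>0]) (auto intro: less_le_trans)
next
  fix b assume "(SUP \<delta>\<in>{0<..}. upper_rate \<delta>) < b"
  then show "\<forall>\<^sub>F x in at_right 0. upper_rate x < b"
    unfolding eventually_at_right[OF zero_less_one]
    using upper_rate_le_Sup by (intro exI[of _ 1]) (auto intro: le_less_trans)
qed

lemma h_top_eq_Sup: "h_top f = (SUP \<delta>\<in>{0<..}. upper_rate \<delta>)"
  unfolding h_top_def using upper_rate_tendsto unfolding upper_rate_def[abs_def]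
  by (intro tendsto_Lim) auto

lemma tendsto_h_top_squeeze:
  fixes g :: "real \<Rightarrow> ereal"
  assumes "0 < c" "0 < d" "0 < \<epsilon>\<^sub>0"
    and lower: "\<And>\<epsilon>. 0 < \<epsilon> \<Longrightarrow> \<epsilon> < \<epsilon>\<^sub>0 \<Longrightarrow> lower_rate (c * \<epsilon>) \<le> g \<epsilon>"
    and upper: "\<And>\<epsilon>. 0 < \<epsilon> \<Longrightarrow> \<epsilon> < \<epsilon>\<^sub>0 \<Longrightarrow> g \<epsilon> \<le> lower_rate (d * \<epsilon>)"
  shows "(g \<longlongrightarrow> h_top f) (at_right 0)"
  unfolding h_top_eq_Sup
proof (rule order_tendstoI)
  fix a assume "a < (SUP \<delta>\<in>{0<..}. upper_rate \<delta>)"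
  then obtain \<delta> where \<delta>: "0 < \<delta>" "a < upper_rate \<delta>" by (auto simp: less_SUP_iff)
  define b where "b = min \<epsilon>\<^sub>0 (\<delta> / (2 * c))"
  have b: "0 < b" unfolding b_def using \<delta> assms by auto
  show "\<forall>\<^sub>F x in at_right 0. a < g x"
    unfolding eventually_at_right[OF b]
  proof (intro exI[of _ b] conjI allI impI)
    fix z assume z: "0 < z" "z < b"
    have "2 * (c * z) \<le> \<delta>" using z assms unfolding b_def by (simp add: field_simps)
    then have "a < upper_rate (2 * (c * z))"
      using upper_rate_antimono[of "2 * (c * z)" \<delta>] \<delta> z assms by (auto intro: less_le_trans)
    also have "\<dots> \<le> lower_rate (c * z)" using z assms by (intro upper_rate_double_le_lower_rate) auto
    also have "\<dots> \<le> g z" using z lower b_def by auto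
    finally show "a < g z" .
  qed (use b in auto)
next
  fix b assume "(SUP \<delta>\<in>{0<..}. upper_rate \<delta>) < b"
  show "\<forall>\<^sub>F x in at_right 0. g x < b"
    unfolding eventually_at_right[OF \<open>0 < \<epsilon>\<^sub>0\<close>]
  proof (intro exI[of _ \<epsilon>\<^sub>0] conjI allI impI)
    fix z assume z: "0 < z" "z < \<epsilon>\<^sub>0"
    have "g z \<le> lower_rate (d * z)" using z upper by auto
    also have "\<dots> \<le> upper_rate (d * z)" by (rule lower_rate_le_upper_rate)
    also have "\<dots> \<le> (SUP \<delta>\<in>{0<..}. upper_rate \<delta>)" using z assms by (intro upper_rate_le_Sup) auto
    finally show "g z < b" using \<open>(SUP \<delta>\<in>{0<..}. upper_rate \<delta>) < b\<close> by auto
  qed (use assms in auto)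
qed

section \<open>Closed sets\<close>

definition separated :: "nat \<Rightarrow> real \<Rightarrow> 'a set \<Rightarrow> bool" where
  "separated n \<rho> F \<longleftrightarrow> finite F \<and> (\<forall>a\<in>F. \<forall>b\<in>F. a \<noteq> b \<longrightarrow> \<rho> < dn f n a b)"

lemma separated_card_le_spanning:
  assumes "0 < n" "separated n \<rho> F" "spanning n (\<rho>/2) E"
  shows "card F \<le> card E"
proof -
  define g where "g a = (SOME y. y \<in> E \<and> dn f n a y \<le> \<rho>/2)" for a
  have g: "g a \<in> E \<and> dn f n a (g a) \<le> \<rho>/2" for a
    unfolding g_def by (rule someI_ex) (use assms(3) spanning_def in auto)
  have "inj_on g F"
  proof (rule inj_onI, rule ccontr)
    fix a b assume ab: "a \<in> F" "b \<in> F" "g a = g b" "a \<noteq> b"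
    have "dn f n a b \<le> dn f n a (g a) + dn f n (g a) b" by (rule dn_triangle[OF assms(1)])
    also have "\<dots> \<le> \<rho>" using g[of a] g[of b] ab(3) dn_sym[of f n b "g b"] by simp
    finally show False using assms(2) ab unfolding separated_def by force
  qed
  then show ?thesis using g assms(3) unfolding spanning_def by (intro card_inj_on_le) auto
qed

lemma separated_card_ge_span_num:
  assumes "0 < n" "0 < \<rho>"
  shows "\<exists>F. separated n \<rho> F \<and> span_num f n \<rho> \<le> card F"
proof -
  obtain E where E: "spanning n (\<rho>/2) E" using spanning_exists[of n "\<rho>/2"] assms by auto
  define S where "S = {card F | F. separated n \<rho> F}"
  have Sb: "S \<subseteq> {..card E}" unfolding S_def using separated_card_le_spanning[OF assms(1) _ E] by auto
  have finS: "finite S" using finite_subset[OF Sb] by auto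
  have "0 \<in> S" unfolding S_def separated_def by (intro CollectI exI[of _ "{}"]) auto
  then have "Max S \<in> S" using finS by (intro Max_in) auto
  then obtain F where F: "separated n \<rho> F" "card F = Max S" unfolding S_def by auto
  have "spanning n \<rho> F" unfolding spanning_def
  proof (intro conjI allI)
    show "finite F" using F separated_def by auto
    fix x show "\<exists>y\<in>F. dn f n x y \<le> \<rho>"
    proof (rule ccontr)
      assume H: "\<not> (\<exists>y\<in>F. dn f n x y \<le> \<rho>)"
      then have xF: "x \<notin> F" using assms by force
      have "separated n \<rho> (insert x F)" unfolding separated_def
      proof (intro conjI ballI impI)
        show "finite (insert x F)" using F separated_def by auto
        fix a b assume "a \<in> insert x F" "b \<in> insert x F" "a \<noteq> b"
        then show "\<rho> < dn f n a b" using H F(1) dn_sym[of f n _ x] unfolding separated_def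
          by (auto simp: not_le)
      qed
      then have "card (insert x F) \<in> S" unfolding S_def by auto
      then have "card (insert x F) \<le> Max S" using finS by auto
      then show False using F xF separated_def by auto
    qed
  qed
  then show ?thesis using F(1) span_num_le by blast
qed

lemma dn_set_less_iff:
  assumes "0 < n" "A \<noteq> {}"
  shows "dn_set f n x A < e \<longleftrightarrow> (\<exists>a\<in>A. dn f n x a < e)"
proof -
  have "bdd_below {dn f n x a | a. a \<in> A}" using dn_nonneg[OF assms(1)] by (intro bdd_belowI[of _ 0]) auto
  then show ?thesis unfolding dn_set_def using assms by (subst cInf_less_iff) auto
qed

lemma mem_nbhd_iff: "0 < n \<Longrightarrow> A \<noteq> {} \<Longrightarrow> x \<in> nbhd f n e A \<longleftrightarrow> (\<exists>a\<in>A. dn f n x a < e)"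
  unfolding nbhd_def using dn_set_less_iff by auto

lemma nbhd_mono: "s \<le> e \<Longrightarrow> nbhd f n s A \<subseteq> nbhd f n e A"
  unfolding nbhd_def by auto

lemma Hn_leI:
  assumes "0 < n" "B \<noteq> {}" "C \<noteq> {}" "0 \<le> \<epsilon>"
    and H: "\<And>e. \<epsilon> < e \<Longrightarrow> B \<subseteq> nbhd f n e C \<and> C \<subseteq> nbhd f n e B"
  shows "Hn f n B C \<le> \<epsilon>"
proof (rule field_le_epsilon)
  fix d :: real assume "0 < d"
  define S where "S = {\<epsilon>. \<epsilon> > 0 \<and> B \<subseteq> nbhd f n \<epsilon> C \<and> C \<subseteq> nbhd f n \<epsilon> B}"
  have "\<epsilon> + d \<in> S" unfolding S_def using H[of "\<epsilon> + d"] \<open>0 < d\<close> assms(4) by simp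
  moreover have "bdd_below S" unfolding S_def by (rule bdd_belowI[of _ 0]) simp
  ultimately have "Inf S \<le> \<epsilon> + d" by (rule cInf_lower)
  then show "Hn f n B C \<le> \<epsilon> + d" unfolding Hn_def S_def .
qed

lemma nbhd_of_Hn_le:
  assumes "0 < n" "B \<noteq> {}" "C \<noteq> {}" "Hn f n B C \<le> \<epsilon>" "\<epsilon> < e"
  shows "B \<subseteq> nbhd f n e C \<and> C \<subseteq> nbhd f n e B"
proof -
  define S where "S = {\<epsilon>. \<epsilon> > 0 \<and> B \<subseteq> nbhd f n \<epsilon> C \<and> C \<subseteq> nbhd f n \<epsilon> B}"
  have all: "X \<subseteq> nbhd f n (diam+1) Y" if XY: "X \<noteq> {}" "Y \<noteq> {}" for X Y
  proof
    fix x assume "x \<in> X"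
    obtain c where c: "c \<in> Y" using XY(2) by auto
    have "dn f n x c < diam + 1" using dn_le_diam[OF assms(1), of x c] by linarith
    then show "x \<in> nbhd f n (diam+1) Y" using mem_nbhd_iff[OF assms(1) XY(2)] c by blast
  qed
  have "diam + 1 \<in> S" unfolding S_def using all[of B C] all[of C B] assms(2,3) diam_nonneg by simp
  then have "S \<noteq> {}" by auto
  moreover have "bdd_below S" unfolding S_def by (rule bdd_belowI[of _ 0]) simp
  moreover have "Inf S < e" using assms(4,5) unfolding Hn_def S_def by simp
  ultimately obtain s where s: "s \<in> S" "s < e" using cInf_less_iff by metis
  then have "nbhd f n s C \<subseteq> nbhd f n e C" "nbhd f n s B \<subseteq> nbhd f n e B" using nbhd_mono[of s e] by auto
  then show ?thesis using s(1) unfolding S_def by blast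
qed

definition K_net :: "nat \<Rightarrow> real \<Rightarrow> 'a set set \<Rightarrow> bool" where
  "K_net n \<epsilon> G \<longleftrightarrow> finite G \<and> G \<subseteq> KX \<and> (\<forall>B\<in>KX. \<exists>C\<in>G. Hn f n B C \<le> \<epsilon>)"

lemma NK_eq: "NK f n \<epsilon> = Inf {card G | G. K_net n \<epsilon> G}"
  unfolding NK_def K_net_def by simp

lemma K_net_of_spanning:
  assumes "0 < n" "0 < \<epsilon>" "spanning n \<epsilon> E"
  shows "K_net n \<epsilon> {C. C \<subseteq> E \<and> C \<noteq> {}}"
  unfolding K_net_def
proof (intro conjI ballI)
  have finite_E: "finite E" using assms spanning_def by auto
  then show "finite {C. C \<subseteq> E \<and> C \<noteq> {}}" by auto
  show "{C. C \<subseteq> E \<and> C \<noteq> {}} \<subseteq> KX" unfolding KX_def using finite_E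
    by (auto intro: finite_imp_closed finite_subset)
  fix B :: "'a set" assume B: "B \<in> KX"
  define C where "C = {y\<in>E. \<exists>b\<in>B. dn f n b y \<le> \<epsilon>}"
  have Bne: "B \<noteq> {}" using B KX_def by auto
  have Cne: "C \<noteq> {}" using Bne assms(3) unfolding C_def spanning_def by blast
  have "Hn f n B C \<le> \<epsilon>"
  proof (rule Hn_leI[OF assms(1) Bne Cne])
    fix e assume "\<epsilon> < e"
    show "B \<subseteq> nbhd f n e C \<and> C \<subseteq> nbhd f n e B"
    proof
      show "B \<subseteq> nbhd f n e C"
      proof
        fix b assume "b \<in> B"
        then obtain y where "y \<in> E" "dn f n b y \<le> \<epsilon>" using assms(3) spanning_def by blast
        then show "b \<in> nbhd f n e C" using \<open>b\<in>B\<close> \<open>\<epsilon><e\<close> mem_nbhd_iff[OF assms(1) Cne] unfolding C_def by force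
      qed
      show "C \<subseteq> nbhd f n e B"
      proof
        fix y assume "y \<in> C"
        then obtain b where "b \<in> B" "dn f n b y \<le> \<epsilon>" unfolding C_def by auto
        then show "y \<in> nbhd f n e B" using \<open>\<epsilon><e\<close> mem_nbhd_iff[OF assms(1) Bne] dn_sym[of f n b y] by force
      qed
    qed
  qed (use assms in auto)
  moreover have "C \<in> {C. C \<subseteq> E \<and> C \<noteq> {}}" using Cne unfolding C_def by auto
  ultimately show "\<exists>C\<in>{C. C \<subseteq> E \<and> C \<noteq> {}}. Hn f n B C \<le> \<epsilon>" by blast
qed

lemma NK_le_pow2_span_num: assumes "0 < n" "0 < \<epsilon>" shows "NK f n \<epsilon> \<le> 2 ^ span_num f n \<epsilon>"
proof -
  obtain E where E: "spanning n \<epsilon> E" "card E = span_num f n \<epsilon>" using span_num_attained[OF assms] .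
  have finite_E: "finite E" using E spanning_def by auto
  have "NK f n \<epsilon> \<le> card {C. C \<subseteq> E \<and> C \<noteq> {}}"
    unfolding NK_eq by (rule cInf_lower) (use K_net_of_spanning[OF assms E(1)] in auto)
  also have "\<dots> \<le> card (Pow E)" using finite_E by (intro card_mono) auto
  also have "\<dots> = 2 ^ span_num f n \<epsilon>" using finite_E E by (simp add: card_Pow)
  finally show ?thesis .
qed

lemma NK_attained:
  assumes "0 < n" "0 < \<epsilon>" obtains G where "K_net n \<epsilon> G" "card G = NK f n \<epsilon>"
proof -
  obtain E where E: "spanning n \<epsilon> E" using spanning_exists[OF assms] by auto
  have "{card G | G. K_net n \<epsilon> G} \<noteq> {}" using K_net_of_spanning[OF assms E] by auto
  from Inf_nat_def1[OF this] show ?thesis using that unfolding NK_eq by auto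
qed

lemma pow2_card_separated_le_NK:
  assumes "0 < n" "0 < \<epsilon>" "separated n (3*\<epsilon>) F"
  shows "2 ^ card F - 1 \<le> NK f n \<epsilon>"
proof -
  obtain G where G: "K_net n \<epsilon> G" "card G = NK f n \<epsilon>" using NK_attained[OF assms(1,2)] .
  have finite_F: "finite F" using assms separated_def by auto
  define P where "P = Pow F - {{}}"
  have PKX: "P \<subseteq> KX" unfolding P_def KX_def using finite_F by (auto intro: finite_imp_closed finite_subset)
  define \<phi> where "\<phi> S = (SOME C. C \<in> G \<and> Hn f n S C \<le> \<epsilon>)" for S
  have \<phi>: "\<phi> S \<in> G \<and> Hn f n S (\<phi> S) \<le> \<epsilon>" if "S \<in> P" for S
    unfolding \<phi>_def by (rule someI_ex) (use G PKX that K_net_def in blast)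
  \<comment> \<open>a common approximant would put the point \<open>a\<close> of \<open>S - T\<close> within \<open>3\<epsilon>\<close> of \<open>T\<close>\<close>
  have key: False if ST: "S \<in> P" "T \<in> P" "\<phi> S = \<phi> T" "a \<in> S" "a \<notin> T" for S T a
  proof -
    define C where "C = \<phi> S"
    have Cne: "C \<noteq> {}" using \<phi>[OF ST(1)] G PKX unfolding C_def K_net_def KX_def by auto
    have Sne: "S \<noteq> {}" "T \<noteq> {}" using ST P_def by auto
    have e: "\<epsilon> < 3*\<epsilon>/2" using assms by auto
    have 1: "S \<subseteq> nbhd f n (3*\<epsilon>/2) C"
      using nbhd_of_Hn_le[OF assms(1) Sne(1) Cne _ e] \<phi>[OF ST(1)] C_def by auto
    have 2: "C \<subseteq> nbhd f n (3*\<epsilon>/2) T"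
      using nbhd_of_Hn_le[OF assms(1) Sne(2) Cne _ e] \<phi>[OF ST(2)] C_def ST(3) by auto
    obtain c where c: "c \<in> C" "dn f n a c < 3*\<epsilon>/2" using 1 ST(4) mem_nbhd_iff[OF assms(1) Cne] by blast
    obtain t where t: "t \<in> T" "dn f n c t < 3*\<epsilon>/2" using 2 c(1) mem_nbhd_iff[OF assms(1) Sne(2)] by blast
    have "dn f n a t < 3*\<epsilon>" using dn_triangle[OF assms(1), where f=f and x=a and y=c and z=t] c t by linarith
    moreover have "a \<in> F" "t \<in> F" "a \<noteq> t" using ST t P_def by auto
    ultimately show False using assms(3) unfolding separated_def by force
  qed
  have "inj_on \<phi> P"
  proof (rule inj_onI, rule ccontr)
    fix S T assume "S \<in> P" "T \<in> P" "\<phi> S = \<phi> T" "S \<noteq> T"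
    then obtain a where "(a \<in> S \<and> a \<notin> T) \<or> (a \<in> T \<and> a \<notin> S)" by blast
    then show False using key \<open>S \<in> P\<close> \<open>T \<in> P\<close> \<open>\<phi> S = \<phi> T\<close> by metis
  qed
  then have "card P \<le> card G" using \<phi> G K_net_def by (intro card_inj_on_le) auto
  moreover have "card P = 2 ^ card F - 1" unfolding P_def using finite_F by (simp add: card_Pow)
  ultimately show ?thesis using G by simp
qed


lemma ln_ln_NK_le:
  assumes "0 < n" "0 < \<epsilon>"
  shows "ln (ln (real (NK f n \<epsilon>))) \<le> ln (real (span_num f n \<epsilon>)) + 1"
proof -
  have "real (NK f n \<epsilon>) \<le> 2 ^ span_num f n \<epsilon>"
    using NK_le_pow2_span_num[OF assms] by (metis of_nat_le_iff of_nat_numeral of_nat_power)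
  then show ?thesis using span_num_pos[OF assms] by (intro ln_ln_le_of_le_power2) auto
qed

lemma ln_ln_NK_ge:
  assumes "0 < n" "0 < \<epsilon>"
  shows "ln (real (span_num f n (3*\<epsilon>))) - 4 \<le> ln (ln (real (NK f n \<epsilon>)))"
proof -
  obtain F where F: "separated n (3*\<epsilon>) F" "span_num f n (3*\<epsilon>) \<le> card F"
    using separated_card_ge_span_num[of n "3*\<epsilon>"] assms by auto
  have s1: "1 \<le> span_num f n (3*\<epsilon>)" using span_num_pos assms by auto
  have "2 ^ card F - 1 \<le> NK f n \<epsilon>" by (rule pow2_card_separated_le_NK[OF assms F(1)])
  then have "real (2 ^ card F - 1) \<le> real (NK f n \<epsilon>)" by (simp only: of_nat_le_iff)
  then have "2 ^ card F - 1 \<le> real (NK f n \<epsilon>)" by (simp add: of_nat_diff)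
  then have "ln (real (card F)) - 4 \<le> ln (ln (real (NK f n \<epsilon>)))"
    using s1 F(2) by (intro ln_ln_ge_of_ln_ge ln_ge_of_pow2_minus_one_le) auto
  moreover have "ln (real (span_num f n (3*\<epsilon>))) \<le> ln (real (card F))"
    using s1 F(2) by (subst ln_le_cancel_iff) auto
  ultimately show ?thesis by linarith
qed

lemma NK_tendsto: "((\<lambda>\<epsilon>. liminf (\<lambda>n. ereal (ln (ln (real (NK f n \<epsilon>))) / real n))) \<longlongrightarrow> h_top f) (at_right 0)"
proof (rule tendsto_h_top_squeeze[of 3 1 1])
  fix \<epsilon> :: real assume e: "0 < \<epsilon>" "\<epsilon> < 1"
  have "lower_rate (3*\<epsilon>) = liminf (\<lambda>n. ereal ((ln (real (span_num f n (3*\<epsilon>))) - 4) / real n))"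
    unfolding lower_rate_def by (simp add: liminf_add_const_over_n[where c="-4", simplified])
  also have "\<dots> \<le> liminf (\<lambda>n. ereal (ln (ln (real (NK f n \<epsilon>))) / real n))"
    by (intro Liminf_mono eventually_sequentiallyI[of 1]) (use ln_ln_NK_ge e in \<open>auto intro!: divide_right_mono\<close>)
  finally show "lower_rate (3*\<epsilon>) \<le> liminf (\<lambda>n. ereal (ln (ln (real (NK f n \<epsilon>))) / real n))" .
  have "liminf (\<lambda>n. ereal (ln (ln (real (NK f n \<epsilon>))) / real n))
      \<le> liminf (\<lambda>n. ereal ((ln (real (span_num f n \<epsilon>)) + 1) / real n))"
    by (intro Liminf_mono eventually_sequentiallyI[of 1]) (use ln_ln_NK_le e in \<open>auto intro!: divide_right_mono\<close>)
  also have "\<dots> = lower_rate (1*\<epsilon>)" unfolding lower_rate_def by (simp add: liminf_add_const_over_n)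
  finally show "liminf (\<lambda>n. ereal (ln (ln (real (NK f n \<epsilon>))) / real n)) \<le> lower_rate (1*\<epsilon>)" .
qed auto

section \<open>Measures: the upper bound\<close>

lemma borel_measurable_dn_left[measurable]: "(\<lambda>x. dn f n x a) \<in> borel_measurable borel"
  by (rule borel_measurable_continuous_onI[OF continuous_on_dn_left])

lemma borel_measurable_dn[measurable]: "(\<lambda>p. dn f n (fst p) (snd p)) \<in> borel_measurable borel"
  by (rule borel_measurable_continuous_onI[OF continuous_on_dn])

lemma abs_dn_le_diam: "0 < n \<Longrightarrow> \<bar>dn f n x y\<bar> \<le> diam"
  using dn_nonneg[of n f x y] dn_le_diam[of n x y] by simp

lemma integrable_dn:
  assumes "finite_measure M" "0 < n" "(\<lambda>p. dn f n (a p) (b p)) \<in> borel_measurable M"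
  shows "integrable M (\<lambda>p. dn f n (a p) (b p))"
  using assms abs_dn_le_diam by (intro finite_measure.integrable_const_bound[where B=diam] AE_I2) auto

definition W1n_net :: "nat \<Rightarrow> real \<Rightarrow> 'a measure set \<Rightarrow> bool" where
  "W1n_net n \<epsilon> E' \<longleftrightarrow> finite E' \<and> E' \<subseteq> probs \<and> (\<forall>\<mu>\<in>probs. \<exists>\<nu>\<in>E'. W1n f n \<mu> \<nu> \<le> \<epsilon>)"

lemma NM_eq: "NM f n \<epsilon> = Inf {card E' | E'. W1n_net n \<epsilon> E'}"
  unfolding NM_def W1n_net_def by simp

lemma bdd_below_coupling_costs:
  "0 < n \<Longrightarrow> bdd_below {integral\<^sup>L \<pi> (\<lambda>p. dn f n (fst p) (snd p)) | \<pi>. \<pi> \<in> couplings \<mu> \<nu>}"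
  by (rule bdd_belowI[of _ 0]) (use dn_nonneg in \<open>auto intro!: Bochner_Integration.integral_nonneg\<close>)

context
  fixes n :: nat and \<epsilon> :: real and E :: "'a set" and y :: "nat \<Rightarrow> 'a"
  assumes n0: "0 < n" and e0: "0 < \<epsilon>" and spanning_E: "spanning n (\<epsilon>/2) E"
    and bij_y: "bij_betw y {..<card E} E"
begin

lemma finite_E: "finite E" using spanning_E unfolding spanning_def by auto
lemma E_nonempty: "E \<noteq> {}" using spanning_nonempty[OF spanning_E] .
lemma card_E_pos: "0 < card E" using finite_E E_nonempty by auto
lemma image_y: "y ` {..<card E} = E" using bij_y unfolding bij_betw_def by auto
lemma inj_on_y: "inj_on y {..<card E}" using bij_y unfolding bij_betw_def by auto

definition nearest :: "'a \<Rightarrow> nat" where "nearest x = (LEAST i. i < card E \<and> dn f n x (y i) \<le> \<epsilon>/2)"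

lemma nearest_close: "nearest x < card E \<and> dn f n x (y (nearest x)) \<le> \<epsilon>/2"
proof -
  obtain z where "z \<in> E" "dn f n x z \<le> \<epsilon>/2" using spanning_E unfolding spanning_def by auto
  moreover from this(1) have "z \<in> y ` {..<card E}" using image_y by simp
  ultimately obtain i where "i < card E" "dn f n x (y i) \<le> \<epsilon>/2" by auto
  then show ?thesis unfolding nearest_def by (intro LeastI[where P="\<lambda>i. i < card E \<and> dn f n x (y i) \<le> \<epsilon>/2"]) auto
qed

lemma nearest_measurable: "nearest \<in> borel \<rightarrow>\<^sub>M count_space UNIV"
  unfolding nearest_def by (rule measurable_Least) measurable

lemma sets_cell: "{x. nearest x = i} \<in> sets borel"
  using measurable_sets[OF nearest_measurable, of "{i}"] by (simp add: vimage_def)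

definition grid :: nat where "grid = nat \<lceil>2 * diam * real (card E) / \<epsilon>\<rceil> + 1"

lemma grid_pos: "1 \<le> grid" unfolding grid_def by simp

lemma real_grid: "real grid = of_int \<lceil>2 * diam * real (card E) / \<epsilon>\<rceil> + 1"
  unfolding grid_def using diam_nonneg e0 by simp

lemma grid_fine: "diam * real (card E) / real grid \<le> \<epsilon>/2"
proof -
  have "2 * diam * real (card E) / \<epsilon> \<le> real grid"
    unfolding real_grid using le_of_int_ceiling[of "2 * diam * real (card E) / \<epsilon>"] by linarith
  then have "2 * diam * real (card E) \<le> real grid * \<epsilon>" using e0 by (simp add: field_simps)
  then show ?thesis using grid_pos by (simp add: field_simps)
qed

lemma grid_le: "real grid \<le> 2 * diam * real (card E) / \<epsilon> + 2"
  unfolding real_grid using ceiling_correct[of "2 * diam * real (card E) / \<epsilon>"] by linarith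

definition grid_measures :: "'a measure set" where
  "grid_measures = {\<nu> \<in> probs. emeasure \<nu> (UNIV - E) = 0 \<and> (\<forall>i<card E. \<exists>l::nat. measure \<nu> {y i} = real l / real grid)}"

lemma finite_card_grid_measures: "finite grid_measures \<and> card grid_measures \<le> (grid + 1) ^ card E"
proof -
  define \<Psi> where "\<Psi> \<nu> = (\<lambda>i\<in>{..<card E}. measure \<nu> {y i})" for \<nu> :: "'a measure"
  define T where "T = PiE {..<card E} (\<lambda>_. (\<lambda>l. real l / real grid) ` {..grid})"
  have fT: "finite T" unfolding T_def by (intro finite_PiE) auto
  have cT: "card T \<le> (grid + 1) ^ card E"
  proof -
    have "card T = (\<Prod>i<card E. card ((\<lambda>l. real l / real grid) ` {..grid}))" unfolding T_def
      by (simp add: card_PiE)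
    also have "\<dots> \<le> (\<Prod>i<card E. grid + 1)"
      by (intro prod_mono conjI) (auto intro: order_trans[OF card_image_le])
    finally show ?thesis by simp
  qed
  have img: "\<Psi> ` grid_measures \<subseteq> T"
  proof
    fix v assume "v \<in> \<Psi> ` grid_measures"
    then obtain \<nu> where \<nu>: "\<nu> \<in> grid_measures" "v = \<Psi> \<nu>" by auto
    then interpret prob_space \<nu> unfolding grid_measures_def probs_def by auto
    have "v i \<in> (\<lambda>l. real l / real grid) ` {..grid}" if iE: "i < card E" for i
    proof -
      obtain l :: nat where l: "measure \<nu> {y i} = real l / real grid" using \<nu> iE unfolding grid_measures_def by auto
      have "measure \<nu> {y i} \<le> 1" by simp
      then have "real l \<le> real grid" using l grid_pos by (simp add: field_simps)
      then have "l \<in> {..grid}" by simp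
      then show ?thesis using l \<nu>(2) iE unfolding \<Psi>_def by auto
    qed
    moreover have "v \<in> extensional {..<card E}" using \<nu>(2) unfolding \<Psi>_def by auto
    ultimately show "v \<in> T" unfolding T_def by (auto simp: PiE_def)
  qed
  have inj: "inj_on \<Psi> grid_measures"
  proof (rule inj_onI)
    fix \<nu>1 \<nu>2 assume H: "\<nu>1 \<in> grid_measures" "\<nu>2 \<in> grid_measures" "\<Psi> \<nu>1 = \<Psi> \<nu>2"
    show "\<nu>1 = \<nu>2"
    proof (rule probs_eq_finite_supportI[of _ _ E])
      fix z assume "z \<in> E"
      then obtain i where "i < card E" "z = y i" using image_y by auto
      then show "measure \<nu>1 {z} = measure \<nu>2 {z}" using fun_cong[OF H(3), of i] unfolding \<Psi>_def by auto
    qed (use H finite_E in \<open>auto simp: grid_measures_def\<close>)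
  qed
  have "finite grid_measures" using inj_on_finite[OF inj img fT] .
  moreover have "card grid_measures \<le> card T" using card_inj_on_le[OF inj img fT] .
  ultimately show ?thesis using cT by simp
qed

context
  fixes \<mu> :: "'a measure" assumes mu: "\<mu> \<in> probs"
begin

lemma prob_space_mu: "prob_space \<mu>" using mu unfolding probs_def by auto
lemma sets_mu[measurable_cong]: "sets \<mu> = sets borel" using mu unfolding probs_def by auto
lemma space_mu[simp]: "space \<mu> = UNIV" using sets_eq_imp_space_eq[OF sets_mu] by simp

text \<open>
  A point \<open>x\<close> of the cell of \<open>y i\<close>, \<open>i > 0\<close>, is moved to \<open>y i\<close> if an independent uniform \<open>u\<close> satisfies
  \<open>u < keep_prob i\<close> and to \<open>y 0\<close> otherwise. Then \<open>rounded\<close> gives each \<open>y i\<close>, \<open>i > 0\<close>, the mass of its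
  cell rounded down to a multiple of \<open>1/grid\<close>, and the remainder to \<open>y 0\<close>; the points moved to \<open>y 0\<close>
  carry mass at most \<open>card E / grid\<close>, which is what makes \<open>W\<^sub>1\<^sup>n(\<mu>, rounded) \<le> \<epsilon>\<close>.
\<close>

definition cell_mass :: "nat \<Rightarrow> real" where "cell_mass i = measure \<mu> {x. nearest x = i}"
definition cell_quota :: "nat \<Rightarrow> nat" where "cell_quota i = nat \<lfloor>real grid * cell_mass i\<rfloor>"
definition keep_prob :: "nat \<Rightarrow> real" where
  "keep_prob i = (if i = 0 then 1 else if cell_mass i = 0 then 0 else (real (cell_quota i) / real grid) / cell_mass i)"
definition target :: "nat \<Rightarrow> real \<Rightarrow> 'a" where "target i u = (if i = 0 \<or> u < keep_prob i then y i else y 0)"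
definition transport :: "'a \<times> real \<Rightarrow> 'a \<times> 'a" where "transport p = (fst p, target (nearest (fst p)) (snd p))"
definition base :: "('a \<times> real) measure" where "base = \<mu> \<Otimes>\<^sub>M unif01"
definition plan :: "('a \<times> 'a) measure" where "plan = distr base borel transport"
definition rounded :: "'a measure" where "rounded = distr plan borel snd"

lemma cell_mass_nonneg: "0 \<le> cell_mass i" unfolding cell_mass_def by simp
lemma cell_quota_le: "real (cell_quota i) / real grid \<le> cell_mass i" and cell_mass_minus_quota_le: "cell_mass i - real (cell_quota i) / real grid \<le> 1 / real grid"
proof -
  have K: "0 < real grid" using grid_pos by simp
  have z: "0 \<le> real grid * cell_mass i" using cell_mass_nonneg K by simp
  have e: "real (cell_quota i) = real_of_int \<lfloor>real grid * cell_mass i\<rfloor>" unfolding cell_quota_def using z by simp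
  have "real_of_int \<lfloor>real grid * cell_mass i\<rfloor> \<le> real grid * cell_mass i" by simp
  then show "real (cell_quota i) / real grid \<le> cell_mass i" using e K by (simp add: field_simps)
  have "real grid * cell_mass i < real_of_int \<lfloor>real grid * cell_mass i\<rfloor> + 1" by linarith
  then have a: "real grid * cell_mass i - real (cell_quota i) \<le> 1" using e by linarith
  have "cell_mass i - real (cell_quota i) / real grid = (real grid * cell_mass i - real (cell_quota i)) / real grid" using K by (simp add: field_simps)
  also have "\<dots> \<le> 1 / real grid" using a K by (intro divide_right_mono) auto
  finally show "cell_mass i - real (cell_quota i) / real grid \<le> 1 / real grid" .
qed

lemma keep_prob_range: "0 \<le> keep_prob i \<and> keep_prob i \<le> 1"
proof (cases "i = 0 \<or> cell_mass i = 0")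
  case True then show ?thesis unfolding keep_prob_def by auto
next
  case False
  then have wp: "0 < cell_mass i" using cell_mass_nonneg[of i] by auto
  have "0 \<le> real (cell_quota i) / real grid" by simp
  moreover have "real (cell_quota i) / real grid / cell_mass i \<le> 1"
  proof -
    have K: "0 < real grid" using grid_pos by simp
    have "real (cell_quota i) \<le> real grid * cell_mass i" using cell_quota_le[of i] K by (simp add: field_simps)
    then show ?thesis using K wp by (simp add: divide_le_eq_1)
  qed
  ultimately show ?thesis unfolding keep_prob_def using False wp by auto
qed

lemma cell_mass_keep_prob: assumes i: "i \<noteq> 0" shows "cell_mass i * keep_prob i = real (cell_quota i) / real grid"
proof (cases "cell_mass i = 0")
  case True
  then show ?thesis using i unfolding keep_prob_def cell_quota_def by simp
next
  case False
  then show ?thesis using i unfolding keep_prob_def by simp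
qed

lemma prob_space_base: "prob_space base" unfolding base_def by (intro prob_space_pair prob_space_mu prob_space_unif01)
lemma space_base[simp]: "space base = UNIV" unfolding base_def by (simp add: space_pair_measure)

lemma sets_base_Times: "A \<in> sets borel \<Longrightarrow> B \<in> sets borel \<Longrightarrow> A \<times> B \<in> sets base"
  unfolding base_def by (intro pair_measureI) (auto simp: sets_mu sets_unif01)

lemma measure_base_Times: "A \<in> sets borel \<Longrightarrow> B \<in> sets borel \<Longrightarrow> measure base (A \<times> B) = measure \<mu> A * measure unif01 B"
proof -
  assume AB: "A \<in> sets borel" "B \<in> sets borel"
  interpret sigma_finite_measure unif01 using prob_space_unif01 by (rule prob_space_imp_sigma_finite)
  interpret mu: prob_space \<mu> by (rule prob_space_mu)
  interpret U: prob_space unif01 by (rule prob_space_unif01)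
  have "emeasure base (A \<times> B) = emeasure \<mu> A * emeasure unif01 B"
    unfolding base_def using AB by (intro emeasure_pair_measure_Times) (auto simp: sets_mu sets_unif01)
  then show ?thesis unfolding measure_def
    by (simp add: mu.emeasure_eq_measure U.emeasure_eq_measure ennreal_mult'' enn2real_mult)
qed

lemma fst_measurable_base: "fst \<in> base \<rightarrow>\<^sub>M borel"
proof -
  have "fst \<in> base \<rightarrow>\<^sub>M \<mu>" unfolding base_def by (rule measurable_fst)
  then show ?thesis by (simp add: measurable_cong_sets[OF refl sets_mu])
qed

lemma nearest_fst_measurable: "(\<lambda>p. nearest (fst p)) \<in> base \<rightarrow>\<^sub>M count_space UNIV"
  using fst_measurable_base nearest_measurable by (rule measurable_compose)

lemma pair_const_measurable: "(\<lambda>p. (fst p, c)) \<in> base \<rightarrow>\<^sub>M (borel :: ('a \<times> 'a) measure)"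
proof -
  have "(\<lambda>x::'a. (x, c)) \<in> borel \<rightarrow>\<^sub>M (borel :: ('a \<times> 'a) measure)"
    by (intro borel_measurable_continuous_onI continuous_intros)
  from measurable_compose[OF fst_measurable_base this] show ?thesis by simp
qed

lemma transport_measurable: "transport \<in> base \<rightarrow>\<^sub>M borel"
proof -
  have F: "(\<lambda>p. (fst p, if i = 0 \<or> snd p < keep_prob i then y i else y 0)) \<in> base \<rightarrow>\<^sub>M (borel :: ('a \<times> 'a) measure)" for i
  proof -
    have eq: "(\<lambda>p. (fst p, if i = 0 \<or> snd p < keep_prob i then y i else y 0))
        = (\<lambda>p. if i = 0 \<or> snd p < keep_prob i then (fst p, y i) else (fst p, y 0))" by auto
    show ?thesis unfolding eq
    proof (rule measurable_If[OF pair_const_measurable pair_const_measurable])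
      have "{p \<in> space base. i = 0 \<or> snd p < keep_prob i} = (if i = 0 then UNIV \<times> UNIV else UNIV \<times> {u. u < keep_prob i})" by auto
      moreover have "(UNIV :: 'a set) \<times> (UNIV :: real set) \<in> sets base" "(UNIV :: 'a set) \<times> {u. u < keep_prob i} \<in> sets base"
        by (intro sets_base_Times; simp)+
      ultimately show "{p \<in> space base. i = 0 \<or> snd p < keep_prob i} \<in> sets base" by simp
    qed
  qed
  have "(\<lambda>p. (\<lambda>i p. (fst p, if i = 0 \<or> snd p < keep_prob i then y i else y 0)) (nearest (fst p)) p) \<in> base \<rightarrow>\<^sub>M borel"
    by (rule measurable_compose_countable[OF F nearest_fst_measurable])
  then show ?thesis unfolding transport_def target_def by simp
qed

lemma prob_space_plan: "prob_space plan"
  unfolding plan_def by (rule prob_space.prob_space_distr[OF prob_space_base transport_measurable])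

lemma sets_plan: "sets plan = sets borel" unfolding plan_def by simp

lemma plan_fst: "distr plan borel fst = \<mu>"
proof -
  have "distr plan borel fst = distr base borel (fst \<circ> transport)"
    unfolding plan_def by (rule distr_distr[OF measurable_fst_borel transport_measurable])
  also have "\<dots> = distr base \<mu> fst"
    by (rule distr_cong) (auto simp: transport_def sets_mu)
  also have "\<dots> = \<mu>" unfolding base_def by (rule prob_space.distr_pair_fst[OF prob_space_unif01])
  finally show ?thesis .
qed

lemma rounded_eq_distr: "rounded = distr base borel (\<lambda>p. target (nearest (fst p)) (snd p))"
proof -
  have "rounded = distr base borel (snd \<circ> transport)"
    unfolding rounded_def plan_def by (rule distr_distr[OF measurable_snd_borel transport_measurable])
  then show ?thesis by (simp add: transport_def comp_def)
qed

lemma target_measurable: "(\<lambda>p. target (nearest (fst p)) (snd p)) \<in> base \<rightarrow>\<^sub>M borel"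
  using measurable_compose[OF transport_measurable measurable_snd_borel] by (simp add: transport_def comp_def)

lemma rounded_in_probs: "rounded \<in> probs"
proof -
  have "snd \<in> plan \<rightarrow>\<^sub>M (borel :: 'a measure)"
    by (subst measurable_cong_sets[OF sets_plan refl]) (rule measurable_snd_borel)
  then show ?thesis unfolding probs_def rounded_def
    using prob_space.prob_space_distr[OF prob_space_plan] by simp
qed

lemma plan_in_couplings: "plan \<in> couplings \<mu> rounded"
  unfolding couplings_def using prob_space_plan sets_plan plan_fst rounded_def by simp

lemma target_in: "i < card E \<Longrightarrow> target i u \<in> E"
  unfolding target_def using image_y card_E_pos by auto

lemma emeasure_rounded: "A \<in> sets borel \<Longrightarrow> emeasure rounded A = emeasure base ((\<lambda>p. target (nearest (fst p)) (snd p)) -` A)"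
  unfolding rounded_eq_distr by (subst emeasure_distr[OF target_measurable]) auto

lemma measure_rounded: "A \<in> sets borel \<Longrightarrow> measure rounded A = measure base ((\<lambda>p. target (nearest (fst p)) (snd p)) -` A)"
  unfolding measure_def using emeasure_rounded by simp

lemma E_closed: "closed E" using finite_E by (rule finite_imp_closed)

lemma emeasure_rounded_outside: "emeasure rounded (UNIV - E) = 0"
proof -
  have "(\<lambda>p. target (nearest (fst p)) (snd p)) -` (UNIV - E) = {}" using target_in nearest_close by auto
  moreover have "UNIV - E \<in> sets borel" using E_closed by (intro borel_open) (simp add: open_Diff)
  ultimately show ?thesis using emeasure_rounded by simp
qed

lemma measure_rounded_point:
  assumes "0 < i" "i < card E" shows "measure rounded {y i} = real (cell_quota i) / real grid"
proof -
  have pt: "target (nearest x) u = y i \<longleftrightarrow> nearest x = i \<and> u < keep_prob i" for x u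
  proof
    assume H: "target (nearest x) u = y i"
    have jx: "nearest x < card E" using nearest_close by auto
    have y0: "y 0 \<noteq> y i" using inj_on_y assms card_E_pos by (metis inj_on_contraD lessThan_iff less_not_refl2)
    have yj: "y (nearest x) = y i \<Longrightarrow> nearest x = i" using inj_on_y assms jx by (meson inj_on_contraD lessThan_iff)
    have "nearest x = i"
      using H y0 yj unfolding target_def by (auto split: if_splits)
    moreover then have "u < keep_prob i" using H y0 assms unfolding target_def by (auto split: if_splits)
    ultimately show "nearest x = i \<and> u < keep_prob i" by simp
  next
    assume "nearest x = i \<and> u < keep_prob i"
    then show "target (nearest x) u = y i" unfolding target_def by simp
  qed
  have pre: "(\<lambda>p. target (nearest (fst p)) (snd p)) -` {y i} = {x. nearest x = i} \<times> {u. u < keep_prob i}"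
    using pt by auto
  have "measure rounded {y i} = measure base ({x. nearest x = i} \<times> {u. u < keep_prob i})"
    using measure_rounded[OF sets_borel_singleton] pre by simp
  also have "\<dots> = cell_mass i * measure unif01 {u. u < keep_prob i}"
    unfolding cell_mass_def by (intro measure_base_Times sets_cell) simp
  also have "\<dots> = cell_mass i * keep_prob i" using measure_unif01_less keep_prob_range by simp
  also have "\<dots> = real (cell_quota i) / real grid" using cell_mass_keep_prob assms by simp
  finally show ?thesis .
qed

lemma sum_measure_rounded_points: "(\<Sum>i<card E. measure rounded {y i}) = 1"
proof -
  interpret prob_space rounded using rounded_in_probs unfolding probs_def by auto
  have sets: "sets rounded = sets borel" using rounded_in_probs unfolding probs_def by auto
  then have "space rounded = UNIV" using sets_eq_imp_space_eq[of rounded borel] by simp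
  then have "ennreal 1 = (\<Sum>z\<in>E. emeasure rounded {z})"
    using emeasure_eq_sum_finite_support[OF sets finite_E emeasure_rounded_outside sets.top]
      emeasure_space_1 by simp
  also have "\<dots> = ennreal (\<Sum>z\<in>E. prob {z})" by (simp add: emeasure_eq_measure sum_ennreal)
  finally have "(\<Sum>z\<in>E. prob {z}) = 1" by (subst (asm) ennreal_inj) (auto intro: sum_nonneg)
  then show ?thesis using sum.reindex[OF inj_on_y, of "\<lambda>z. prob {z}"] image_y by simp
qed

lemma measure_rounded_base_point: "\<exists>l::nat. measure rounded {y 0} = real l / real grid"
proof -
  define L where "L = (\<Sum>i\<in>{1..<card E}. cell_quota i)"
  have "(\<Sum>i\<in>{1..<card E}. measure rounded {y i}) = (\<Sum>i\<in>{1..<card E}. real (cell_quota i) / real grid)"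
    by (intro sum.cong refl measure_rounded_point) auto
  also have "\<dots> = real L / real grid" unfolding L_def by (simp add: sum_divide_distrib)
  finally have "(\<Sum>i<card E. measure rounded {y i}) = measure rounded {y 0} + real L / real grid"
    using card_E_pos unfolding lessThan_atLeast0 by (subst sum.atLeast_Suc_lessThan) auto
  then have y0: "measure rounded {y 0} = (real grid - real L) / real grid"
    using sum_measure_rounded_points grid_pos by (simp add: field_simps)
  have "0 \<le> (real grid - real L) / real grid" unfolding y0[symmetric] by simp
  then have "L \<le> grid" using grid_pos by (simp add: zero_le_divide_iff)
  then show ?thesis using y0 by (intro exI[of _ "grid - L"]) (simp add: of_nat_diff)
qed

lemma rounded_in_grid_measures: "rounded \<in> grid_measures"
  unfolding grid_measures_def
proof (intro CollectI conjI allI impI rounded_in_probs emeasure_rounded_outside)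
  fix i assume "i < card E"
  then show "\<exists>l::nat. measure rounded {y i} = real l / real grid"
    using measure_rounded_base_point measure_rounded_point by (cases "i = 0") auto
qed

definition moved :: "('a \<times> real) set" where
  "moved = (\<Union>i\<in>{1..<card E}. {x. nearest x = i} \<times> {u. \<not> u < keep_prob i})"

lemma sets_moved: "moved \<in> sets base"
  unfolding moved_def by (intro sets.finite_UN ballI sets_base_Times sets_cell) auto

lemma measure_moved_le: "measure base moved \<le> real (card E) / real grid"
proof -
  interpret prob_space base by (rule prob_space_base)
  have "measure base moved \<le> (\<Sum>i\<in>{1..<card E}. measure base ({x. nearest x = i} \<times> {u. \<not> u < keep_prob i}))"
    unfolding moved_def by (intro finite_measure_subadditive_finite) (auto intro!: sets_base_Times sets_cell)
  also have "\<dots> = (\<Sum>i\<in>{1..<card E}. cell_mass i * (1 - keep_prob i))"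
    by (intro sum.cong refl) (simp add: measure_base_Times sets_cell measure_unif01_ge keep_prob_range cell_mass_def)
  also have "\<dots> = (\<Sum>i\<in>{1..<card E}. cell_mass i - real (cell_quota i) / real grid)"
  proof (intro sum.cong refl)
    fix i assume "i \<in> {1..<card E}"
    then have "cell_mass i * keep_prob i = real (cell_quota i) / real grid" by (intro cell_mass_keep_prob) auto
    then show "cell_mass i * (1 - keep_prob i) = cell_mass i - real (cell_quota i) / real grid" by (simp add: algebra_simps)
  qed
  also have "\<dots> \<le> (\<Sum>i\<in>{1..<card E}. 1 / real grid)"
    by (intro sum_mono cell_mass_minus_quota_le)
  also have "\<dots> \<le> real (card E) / real grid" by (simp add: divide_right_mono)
  finally show ?thesis .
qed

lemma dn_target_le: "dn f n x (target (nearest x) u) \<le> \<epsilon>/2 + diam * indicator moved (x, u)"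
proof (cases "(x, u) \<in> moved")
  case True
  then show ?thesis using dn_le_diam[OF n0, of x "target (nearest x) u"] e0 by simp
next
  case False
  then have "nearest x = 0 \<or> u < keep_prob (nearest x)" using nearest_close[of x] unfolding moved_def by auto
  then have "target (nearest x) u = y (nearest x)" unfolding target_def by auto
  then show ?thesis using False nearest_close[of x] by simp
qed

lemma integral_plan_le: "integral\<^sup>L plan (\<lambda>p. dn f n (fst p) (snd p)) \<le> \<epsilon>"
proof -
  interpret prob_space base by (rule prob_space_base)
  have ind: "integrable base (indicator moved :: 'a \<times> real \<Rightarrow> real)"
    using sets_moved by (intro integrable_real_indicator) (auto simp: emeasure_eq_measure)
  have "integral\<^sup>L plan (\<lambda>p. dn f n (fst p) (snd p)) = integral\<^sup>L base (\<lambda>p. dn f n (fst p) (target (nearest (fst p)) (snd p)))"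
    unfolding plan_def by (simp add: integral_distr[OF transport_measurable borel_measurable_dn] transport_def)
  also have "\<dots> \<le> integral\<^sup>L base (\<lambda>p. \<epsilon>/2 + diam * indicator moved p)"
  proof (rule integral_mono)
    show "integrable base (\<lambda>p. dn f n (fst p) (target (nearest (fst p)) (snd p)))"
      using measurable_compose[OF transport_measurable borel_measurable_dn] n0
      by (intro integrable_dn) (auto simp: transport_def prob_space_base prob_space.finite_measure)
    show "integrable base (\<lambda>p. \<epsilon>/2 + diam * indicator moved p)" using ind by simp
  qed (use dn_target_le in auto)
  also have "\<dots> = \<epsilon>/2 + diam * measure base moved"
    using ind sets_moved prob_space by (simp flip: space_base)
  also have "\<dots> \<le> \<epsilon>/2 + diam * (real (card E) / real grid)"
    using measure_moved_le diam_nonneg by (intro add_left_mono mult_left_mono) auto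
  also have "\<dots> \<le> \<epsilon>" using grid_fine by (simp only: times_divide_eq_right[symmetric])
  finally show ?thesis .
qed

lemma W1n_rounded_le: "W1n f n \<mu> rounded \<le> \<epsilon>"
  unfolding W1n_def
proof (rule cInf_lower2)
  show "integral\<^sup>L plan (\<lambda>p. dn f n (fst p) (snd p)) \<in> {integral\<^sup>L \<pi> (\<lambda>p. dn f n (fst p) (snd p)) | \<pi>. \<pi> \<in> couplings \<mu> rounded}"
    using plan_in_couplings by auto
  show "integral\<^sup>L plan (\<lambda>p. dn f n (fst p) (snd p)) \<le> \<epsilon>" by (rule integral_plan_le)
qed (rule bdd_below_coupling_costs[OF n0])

end

lemma W1n_net_grid_measures: "W1n_net n \<epsilon> grid_measures"
  unfolding W1n_net_def using rounded_in_grid_measures W1n_rounded_le finite_card_grid_measures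
  by (auto simp: grid_measures_def)

end

lemma W1n_net_exists:
  assumes "0 < n" "0 < \<epsilon>"
  shows "\<exists>E'. W1n_net n \<epsilon> E'"
proof -
  obtain E where E: "spanning n (\<epsilon>/2) E" using spanning_exists[of n "\<epsilon>/2"] assms by auto
  then obtain y where "bij_betw y {..<card E} E"
    using ex_bij_betw_nat_finite[of E] E(1) unfolding spanning_def lessThan_atLeast0 by blast
  then show ?thesis using W1n_net_grid_measures[OF assms E] by blast
qed

lemma NM_attained:
  assumes "0 < n" "0 < \<epsilon>"
  obtains E' where "W1n_net n \<epsilon> E'" "card E' = NM f n \<epsilon>"
proof -
  have "{card E' | E'. W1n_net n \<epsilon> E'} \<noteq> {}" using W1n_net_exists[OF assms] by auto
  from Inf_nat_def1[OF this] show ?thesis using that unfolding NM_eq by auto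
qed

lemma NM_le_grid_bound:
  assumes "0 < n" "0 < \<epsilon>"
  obtains K :: nat where "real K \<le> 2 * diam * real (span_num f n (\<epsilon>/2)) / \<epsilon> + 2"
    and "NM f n \<epsilon> \<le> (K + 1) ^ span_num f n (\<epsilon>/2)"
proof -
  obtain E where E: "spanning n (\<epsilon>/2) E" "card E = span_num f n (\<epsilon>/2)"
    using span_num_attained[of n "\<epsilon>/2"] assms by auto
  then obtain y where y: "bij_betw y {..<card E} E"
    using ex_bij_betw_nat_finite[of E] E(1) unfolding spanning_def lessThan_atLeast0 by blast
  have grid_bound: "real (grid \<epsilon> E) \<le> 2 * diam * real (span_num f n (\<epsilon>/2)) / \<epsilon> + 2"
    using grid_le[OF assms E(1) y] E(2) by simp
  have "NM f n \<epsilon> \<le> card (grid_measures \<epsilon> E y)"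
    unfolding NM_eq by (rule cInf_lower) (use W1n_net_grid_measures[OF assms E(1) y] in auto)
  also have "\<dots> \<le> (grid \<epsilon> E + 1) ^ card E"
    using finite_card_grid_measures[OF assms E(1) y] by (rule conjunct2)
  also have "\<dots> = (grid \<epsilon> E + 1) ^ span_num f n (\<epsilon>/2)" by (simp only: E(2))
  finally show ?thesis by (rule that[OF grid_bound])
qed

section \<open>Measures: the lower bound\<close>

context
  fixes n :: nat and \<epsilon> :: real and F :: "'a set" and h :: "nat \<Rightarrow> 'a"
  assumes n0: "0 < n" and e0: "0 < \<epsilon>" and separated_F: "separated n (64*\<epsilon>) F"
    and bij_h: "bij_betw h {..<card F} F" and m2: "2 \<le> card F"
begin

definition half :: nat where "half = card F div 2"

lemma half_pos: "1 \<le> half" unfolding half_def using m2 by presburger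

lemma odd_index_less: "i < half \<Longrightarrow> 2*i + 1 < card F" unfolding half_def by presburger

lemma inj_on_h: "inj_on h {..<card F}" using bij_h unfolding bij_betw_def by auto
lemma image_h: "h ` {..<card F} = F" using bij_h unfolding bij_betw_def by auto

text \<open>The \<open>i\<close>-th pair is \<open>{h (2i), h (2i+1)}\<close>; \<open>pick S i\<close> is its first point if \<open>i \<in> S\<close> and its second otherwise.\<close>

definition pick_index :: "nat set \<Rightarrow> nat \<Rightarrow> nat" where "pick_index S i = 2*i + (if i \<in> S then 0 else 1)"
definition pick :: "nat set \<Rightarrow> nat \<Rightarrow> 'a" where "pick S i = h (pick_index S i)"

lemma pick_index_less: assumes "i < half" shows "pick_index S i < card F"
  using odd_index_less[OF assms] unfolding pick_index_def by (auto split: if_splits)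

lemma pick_in: assumes "i < half" shows "pick S i \<in> F"
proof -
  have "pick_index S i \<in> {..<card F}" using pick_index_less[OF assms] by simp
  then have "h (pick_index S i) \<in> h ` {..<card F}" by (rule imageI)
  then show ?thesis unfolding pick_def image_h .
qed

lemma pick_eq_iff:
  assumes "i < half" "i' < half"
  shows "pick S i = pick T i' \<longleftrightarrow> (i = i' \<and> (i \<in> S \<longleftrightarrow> i \<in> T))"
proof -
  have "pick S i = pick T i' \<longleftrightarrow> pick_index S i = pick_index T i'"
  proof
    assume "pick S i = pick T i'"
    then have "h (pick_index S i) = h (pick_index T i')" unfolding pick_def .
    moreover have "pick_index S i \<in> {..<card F}" "pick_index T i' \<in> {..<card F}" using pick_index_less assms by auto
    ultimately show "pick_index S i = pick_index T i'" using inj_onD[OF inj_on_h] by blast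
  qed (simp add: pick_def)
  also have "\<dots> \<longleftrightarrow> (i = i' \<and> (i \<in> S \<longleftrightarrow> i \<in> T))"
    unfolding pick_index_def by (auto split: if_splits; presburger)
  finally show ?thesis .
qed

lemma inj_on_pick: "inj_on (pick S) {..<half}"
proof (rule inj_onI)
  fix x y assume "x \<in> {..<half}" "y \<in> {..<half}" "pick S x = pick S y"
  then show "x = y" using pick_eq_iff[of x y S S] by simp
qed

definition unif_half :: "nat measure" where "unif_half = measure_pmf (pmf_of_set {..<half})"
definition pick_measure :: "nat set \<Rightarrow> 'a measure" where "pick_measure S = distr unif_half borel (pick S)"
definition bowen_ball :: "'a \<Rightarrow> 'a set" where "bowen_ball z = {x. dn f n z x < 32*\<epsilon>}"

lemma prob_space_unif_half: "prob_space unif_half" unfolding unif_half_def by (rule prob_space_measure_pmf)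
lemma pick_measurable: "pick S \<in> unif_half \<rightarrow>\<^sub>M borel" unfolding unif_half_def by (simp add: measurable_pmf_measure1)

lemma open_bowen_ball: "open (bowen_ball z)"
  unfolding bowen_ball_def by (intro open_Collect_less continuous_on_dn_right continuous_on_const)

lemma sets_bowen_ball: "bowen_ball z \<in> sets borel"
  using open_bowen_ball by simp

lemma bowen_balls_disjoint: assumes "z \<in> F" "z' \<in> F" "z \<noteq> z'" shows "bowen_ball z \<inter> bowen_ball z' = {}"
proof (rule ccontr)
  assume "bowen_ball z \<inter> bowen_ball z' \<noteq> {}"
  then obtain x where "dn f n z x < 32*\<epsilon>" "dn f n z' x < 32*\<epsilon>" unfolding bowen_ball_def by auto
  then have "dn f n z z' < 64*\<epsilon>"
    using dn_triangle[OF n0, where f=f and x=z and y=x and z=z'] dn_sym[where f=f and n=n and x=z' and y=x] by linarith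
  then show False using separated_F assms unfolding separated_def by force
qed

lemma pick_measure_in_probs: "pick_measure S \<in> probs"
  unfolding probs_def pick_measure_def using prob_space.prob_space_distr[OF prob_space_unif_half pick_measurable] by simp

lemma measure_pick_measure_point: assumes "i < half" shows "measure (pick_measure S) {pick S i} = 1 / real half"
proof -
  have "measure (pick_measure S) {pick S i} = measure unif_half (pick S -` {pick S i} \<inter> space unif_half)"
    unfolding pick_measure_def by (rule measure_distr[OF pick_measurable sets_borel_singleton])
  also have "\<dots> = real (card ({..<half} \<inter> (pick S -` {pick S i}))) / real (card {..<half})"
    unfolding unif_half_def using half_pos by (subst measure_pmf_of_set) (auto simp: lessThan_empty_iff)
  also have "{..<half} \<inter> (pick S -` {pick S i}) = {i}" using pick_eq_iff[of _ i S S] assms by auto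
  finally show ?thesis by simp
qed

text \<open>
  The part of the mass of \<open>pick_measure S\<close> at \<open>z\<close> that \<open>\<nu>\<close> cannot match inside the Bowen ball of \<open>z\<close>; a
  coupling has to move it by at least \<open>32\<epsilon>\<close>. The balls are disjoint, so the total deficit of
  \<open>m\<close> points is at least \<open>m/half - 1\<close>.
\<close>

definition deficit :: "'a measure \<Rightarrow> 'a \<Rightarrow> real" where
  "deficit \<nu> z = max 0 (1/real half - measure \<nu> (bowen_ball z))"

lemma deficit_le_integral:
  assumes pi: "\<pi> \<in> couplings (pick_measure S) \<nu>"
  shows "(\<Sum>i<half. deficit \<nu> (pick S i)) * (32*\<epsilon>)
           \<le> integral\<^sup>L \<pi> (\<lambda>p. dn f n (fst p) (snd p))"
proof -
  interpret prob_space \<pi> using pi unfolding couplings_def by auto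
  have s\<pi>: "sets \<pi> = sets borel" using pi unfolding couplings_def by auto
  then have sp: "space \<pi> = UNIV" using sets_eq_imp_space_eq by fastforce
  define A where "A i = {pick S i} \<times> (UNIV - bowen_ball (pick S i))" for i
  define escape where "escape = (\<Union>i<half. A i)"
  have A_ev: "A i \<in> events" for i
    unfolding A_def s\<pi> by (intro borel_closed closed_Times closed_Diff open_bowen_ball) auto
  then have escape_ev: "escape \<in> events" unfolding escape_def by auto
  have "(\<Sum>i<half. deficit \<nu> (pick S i)) \<le> (\<Sum>i<half. prob (A i))"
  proof (intro sum_mono)
    fix i assume "i \<in> {..<half}"
    then have "1/real half - measure \<nu> (bowen_ball (pick S i)) \<le> prob (A i)"
      using measure_coupling_point_escape[OF pi sets_bowen_ball, of "pick S i" "pick S i"]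
        measure_pick_measure_point[of i S] unfolding A_def by simp
    then show "deficit \<nu> (pick S i) \<le> prob (A i)" unfolding deficit_def by simp
  qed
  also have "\<dots> = prob escape"
    unfolding escape_def using A_ev pick_eq_iff
    by (intro finite_measure_finite_Union[symmetric]) (auto simp: disjoint_family_on_def A_def)
  finally have deficit: "(\<Sum>i<half. deficit \<nu> (pick S i)) \<le> prob escape" .
  have "prob escape * (32*\<epsilon>) = integral\<^sup>L \<pi> (\<lambda>p. 32*\<epsilon> * indicator escape p)"
    using escape_ev by (simp add: sp)
  also have "\<dots> \<le> integral\<^sup>L \<pi> (\<lambda>p. dn f n (fst p) (snd p))"
  proof (rule integral_mono)
    show "integrable \<pi> (\<lambda>p. 32*\<epsilon> * indicator escape p)"
      using escape_ev by (intro integrable_mult_right integrable_real_indicator) (auto simp: emeasure_eq_measure)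
    show "integrable \<pi> (\<lambda>p. dn f n (fst p) (snd p))"
      using n0 by (intro integrable_dn) (auto simp: measurable_cong_sets[OF s\<pi> refl])
    show "32*\<epsilon> * indicator escape p \<le> dn f n (fst p) (snd p)" for p
      using dn_nonneg[OF n0] by (auto simp: escape_def A_def bowen_ball_def indicator_def not_less)
  qed
  finally show ?thesis using mult_right_mono[OF deficit, of "32*\<epsilon>"] e0 by linarith
qed

lemma deficit_le:
  assumes nu: "\<nu> \<in> probs" and W: "W1n f n (pick_measure S) \<nu> \<le> \<epsilon>"
  shows "(\<Sum>i<half. deficit \<nu> (pick S i)) \<le> 1/32"
proof (rule field_le_epsilon)
  fix d :: real assume d: "0 < d"
  define X where "X = {integral\<^sup>L \<pi> (\<lambda>p. dn f n (fst p) (snd p)) | \<pi>. \<pi> \<in> couplings (pick_measure S) \<nu>}"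
  have Xne: "X \<noteq> {}"
    unfolding X_def pick_measure_def unif_half_def using couplings_distr_pmf_nonempty[OF nu] by auto
  have Xb: "bdd_below X" unfolding X_def by (rule bdd_below_coupling_costs[OF n0])
  have "0 < 32*\<epsilon>*d" using d e0 by simp
  then have "Inf X < \<epsilon> + 32*\<epsilon>*d" using W unfolding W1n_def X_def by linarith
  then obtain x where "x \<in> X" "x < \<epsilon> + 32*\<epsilon>*d" using cInf_less_iff[OF Xne Xb] by auto
  then obtain \<pi> where pi: "\<pi> \<in> couplings (pick_measure S) \<nu>" "integral\<^sup>L \<pi> (\<lambda>p. dn f n (fst p) (snd p)) < \<epsilon> + 32*\<epsilon>*d"
    unfolding X_def by auto
  have "(\<Sum>i<half. deficit \<nu> (pick S i)) * (32*\<epsilon>) < (1/32 + d) * (32*\<epsilon>)"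
    using deficit_le_integral[OF pi(1)] pi(2) by (simp add: algebra_simps)
  then show "(\<Sum>i<half. deficit \<nu> (pick S i)) \<le> 1/32 + d"
    using e0 by (simp add: mult_less_cancel_right)
qed

lemma finite_F: "finite F" using separated_F unfolding separated_def by auto

lemma sum_measure_bowen_balls_le:
  assumes nu: "\<nu> \<in> probs" and Z: "Z \<subseteq> F"
  shows "(\<Sum>z\<in>Z. measure \<nu> (bowen_ball z)) \<le> 1"
proof -
  interpret prob_space \<nu> using nu unfolding probs_def by auto
  have s\<nu>: "sets \<nu> = sets borel" using nu unfolding probs_def by auto
  have fZ: "finite Z" using finite_subset[OF Z finite_F] .
  have "(\<Sum>z\<in>Z. measure \<nu> (bowen_ball z)) = prob (\<Union>z\<in>Z. bowen_ball z)"
  proof (rule finite_measure_finite_Union[symmetric])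
    show "finite Z" by (rule fZ)
    show "bowen_ball ` Z \<subseteq> events" using sets_bowen_ball s\<nu> by auto
    show "disjoint_family_on bowen_ball Z" unfolding disjoint_family_on_def using bowen_balls_disjoint Z by blast
  qed
  also have "\<dots> \<le> 1" by simp
  finally show ?thesis .
qed

lemma card_le_sum_deficit:
  assumes "\<nu> \<in> probs" "Z \<subseteq> F"
  shows "real (card Z) / real half - 1 \<le> (\<Sum>z\<in>Z. deficit \<nu> z)"
proof -
  have "real (card Z) / real half - 1 \<le> real (card Z) / real half - (\<Sum>z\<in>Z. measure \<nu> (bowen_ball z))"
    using sum_measure_bowen_balls_le[OF assms] by simp
  also have "\<dots> = (\<Sum>z\<in>Z. 1/real half - measure \<nu> (bowen_ball z))" by (simp add: sum_subtractf)
  also have "\<dots> \<le> (\<Sum>z\<in>Z. deficit \<nu> z)" unfolding deficit_def by (intro sum_mono) simp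
  finally show ?thesis .
qed

lemma sum_deficit_pick_le:
  assumes "\<nu> \<in> probs" "W1n f n (pick_measure S) \<nu> \<le> \<epsilon>" "A \<subseteq> {..<half}"
  shows "(\<Sum>z\<in>pick S ` A. deficit \<nu> z) \<le> 1/32"
proof -
  have "(\<Sum>z\<in>pick S ` A. deficit \<nu> z) \<le> (\<Sum>z\<in>pick S ` {..<half}. deficit \<nu> z)"
    using assms(3) by (intro sum_mono2) (auto simp: deficit_def)
  also have "\<dots> = (\<Sum>i<half. deficit \<nu> (pick S i))" by (rule sum.reindex_cong[OF inj_on_pick refl]) simp
  also have "\<dots> \<le> 1/32" by (rule deficit_le[OF assms(1,2)])
  finally show ?thesis .
qed

lemma card_symdiff_le:
  assumes \<nu>: "\<nu> \<in> probs" and "S \<subseteq> {..<half}" "T \<subseteq> {..<half}"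
    and "W1n f n (pick_measure S) \<nu> \<le> \<epsilon>" "W1n f n (pick_measure T) \<nu> \<le> \<epsilon>"
  shows "16 * card ((S - T) \<union> (T - S)) \<le> half"
proof -
  define \<Delta> where "\<Delta> = (S - T) \<union> (T - S)"
  have \<Delta>: "\<Delta> \<subseteq> {..<half}" using assms(2,3) unfolding \<Delta>_def by auto
  define ZS where "ZS = pick S ` {..<half}"
  define ZT where "ZT = pick T ` \<Delta>"
  have disj: "ZS \<inter> ZT = {}"
    unfolding ZS_def ZT_def \<Delta>_def using \<Delta> pick_eq_iff[of _ _ S T] by (auto simp: \<Delta>_def)
  have fin: "finite ZS" "finite ZT" unfolding ZS_def ZT_def using finite_subset[OF \<Delta>] by auto
  have "card (ZS \<union> ZT) = half + card \<Delta>"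
    using card_Un_disjoint[OF fin disj] card_image[OF inj_on_pick] card_image[OF inj_on_subset[OF inj_on_pick \<Delta>]]
    unfolding ZS_def ZT_def by simp
  then have "real (half + card \<Delta>) / real half - 1 \<le> (\<Sum>z\<in>ZS \<union> ZT. deficit \<nu> z)"
    using card_le_sum_deficit[OF \<nu>, of "ZS \<union> ZT"] pick_in \<Delta> unfolding ZS_def ZT_def by fastforce
  also have "\<dots> = (\<Sum>z\<in>ZS. deficit \<nu> z) + (\<Sum>z\<in>ZT. deficit \<nu> z)" by (rule sum.union_disjoint[OF fin disj])
  also have "\<dots> \<le> 1/16"
    using sum_deficit_pick_le[OF \<nu> assms(4), of "{..<half}"] sum_deficit_pick_le[OF \<nu> assms(5) \<Delta>]
    unfolding ZS_def ZT_def by simp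
  finally have "real (card \<Delta>) / real half \<le> 1/16" using half_pos by (simp add: field_simps)
  then show ?thesis unfolding \<Delta>_def using half_pos by (simp add: field_simps)
qed

lemma pow2_half_le_card_mult:
  assumes "W1n_net n \<epsilon> E'"
  shows "2 ^ half \<le> card E' * card {A. A \<subseteq> {..<half} \<and> 16 * card A \<le> half}"
proof -
  have fin: "finite E'" and sub: "E' \<subseteq> probs" and cover: "\<forall>\<mu>\<in>probs. \<exists>\<nu>\<in>E'. W1n f n \<mu> \<nu> \<le> \<epsilon>"
    using assms unfolding W1n_net_def by auto
  define V where "V = {A. A \<subseteq> {..<half} \<and> 16 * card A \<le> half}"
  have fV: "finite V" unfolding V_def by (rule finite_subset[of _ "Pow {..<half}"]) auto
  define \<phi> where "\<phi> S = (SOME \<nu>. \<nu> \<in> E' \<and> W1n f n (pick_measure S) \<nu> \<le> \<epsilon>)" for S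
  have \<phi>: "\<phi> S \<in> E' \<and> W1n f n (pick_measure S) (\<phi> S) \<le> \<epsilon>" for S
    unfolding \<phi>_def by (rule someI_ex) (use cover pick_measure_in_probs in blast)
  define fib where "fib \<nu> = {S \<in> Pow {..<half}. \<phi> S = \<nu>}" for \<nu>
  have fibV: "card (fib \<nu>) \<le> card V" if "\<nu> \<in> E'" for \<nu>
  proof (cases "fib \<nu> = {}")
    case True then show ?thesis by simp
  next
    case False
    then obtain S0 where S0: "S0 \<in> fib \<nu>" by auto
    define g where "g T = (S0 - T) \<union> (T - S0)" for T :: "nat set"
    have "inj_on g (fib \<nu>)"
    proof (rule inj_onI)
      fix T1 T2 assume "g T1 = g T2"
      then show "T1 = T2" unfolding g_def by blast
    qed
    moreover have "g ` fib \<nu> \<subseteq> V"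
    proof
      fix A assume "A \<in> g ` fib \<nu>"
      then obtain T where T: "T \<in> fib \<nu>" "A = g T" by auto
      have nu: "\<nu> \<in> probs" using that sub by auto
      have "16 * card A \<le> half" unfolding T(2) g_def
        using card_symdiff_le[OF nu, of S0 T] S0 T(1) \<phi>[of S0] \<phi>[of T] unfolding fib_def by auto
      moreover have "A \<subseteq> {..<half}" using S0 T unfolding fib_def g_def by auto
      ultimately show "A \<in> V" unfolding V_def by auto
    qed
    ultimately show ?thesis using fV by (intro card_inj_on_le) auto
  qed
  have "Pow {..<half} \<subseteq> (\<Union>\<nu>\<in>E'. fib \<nu>)" unfolding fib_def using \<phi> by auto
  then have "card (Pow {..<half}) \<le> card (\<Union>\<nu>\<in>E'. fib \<nu>)"
    using fin by (intro card_mono) (auto simp: fib_def)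
  also have "\<dots> \<le> (\<Sum>\<nu>\<in>E'. card (fib \<nu>))" by (rule card_UN_le[OF fin])
  also have "\<dots> \<le> (\<Sum>\<nu>\<in>E'. card V)" by (intro sum_mono fibV)
  also have "\<dots> = card E' * card V" by simp
  finally show ?thesis unfolding V_def by (simp add: card_Pow)
qed

lemma card_le_ln_NM: "real (card F) / 10 \<le> ln (real (NM f n \<epsilon>))"
proof -
  obtain E' where E': "W1n_net n \<epsilon> E'" "card E' = NM f n \<epsilon>" using NM_attained[OF n0 e0] .
  have "2 ^ half \<le> NM f n \<epsilon> * card {A. A \<subseteq> {..<half} \<and> 16 * card A \<le> half}"
    using pow2_half_le_card_mult[OF E'(1)] E'(2) by simp
  then have "(2::real) ^ half \<le> real (NM f n \<epsilon>) * real (card {A. A \<subseteq> {..<half} \<and> 16 * card A \<le> half})"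
    by (metis of_nat_le_iff of_nat_mult of_nat_numeral of_nat_power)
  also have "\<dots> \<le> real (NM f n \<epsilon>) * ((17/16)^half * 16^(half div 16))"
    by (intro mult_left_mono card_small_subsets_le) auto
  finally have "real half * (7/16) \<le> ln (real (NM f n \<epsilon>))" by (rule ln_ge_of_pow2_le_small_subsets)
  moreover have "card F \<le> 4 * half" unfolding half_def using m2 by presburger
  ultimately show ?thesis by linarith
qed

end

lemma ln_ln_NM_ge:
  assumes "0 < n" "0 < \<epsilon>"
  shows "ln (real (span_num f n (64*\<epsilon>))) - 4 \<le> ln (ln (real (NM f n \<epsilon>)))"
proof -
  obtain F where F: "separated n (64*\<epsilon>) F" "span_num f n (64*\<epsilon>) \<le> card F"
    using separated_card_ge_span_num[of n "64*\<epsilon>"] assms by auto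
  have s1: "1 \<le> span_num f n (64*\<epsilon>)" using span_num_pos assms by auto
  obtain h where h: "bij_betw h {..<card F} F"
    using ex_bij_betw_nat_finite[of F] F(1) unfolding separated_def lessThan_atLeast0 by auto
  have "ln (real (card F)) - 4 \<le> ln (ln (real (NM f n \<epsilon>)))"
    using s1 F(2) card_le_ln_NM[OF assms F(1) h] by (intro ln_ln_ge_of_ln_ge) auto
  moreover have "ln (real (span_num f n (64*\<epsilon>))) \<le> ln (real (card F))"
    using s1 F(2) by (subst ln_le_cancel_iff) auto
  ultimately show ?thesis by linarith
qed

definition grid_const :: "real \<Rightarrow> real" where "grid_const \<epsilon> = ln (2 * diam / \<epsilon> + 3) + 1"

lemma grid_const_ge: "0 < \<epsilon> \<Longrightarrow> 1 \<le> grid_const \<epsilon>"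
  unfolding grid_const_def using diam_nonneg by simp

lemma ln_NM_le:
  assumes "0 < n" "0 < \<epsilon>"
  defines "s \<equiv> span_num f n (\<epsilon>/2)"
  shows "ln (real (NM f n \<epsilon>)) \<le> real s * (grid_const \<epsilon> + ln (real s))"
proof (cases "NM f n \<epsilon> = 0")
  case True
  have "1 \<le> s" unfolding s_def using span_num_pos assms by simp
  then have "0 \<le> real s * (grid_const \<epsilon> + ln (real s))"
    using grid_const_ge[OF assms(2)] by (intro mult_nonneg_nonneg) auto
  then show ?thesis using True by simp
next
  case False
  have s1: "1 \<le> s" unfolding s_def using span_num_pos assms by simp
  obtain K :: nat where K: "real K \<le> 2 * diam * real s / \<epsilon> + 2" "NM f n \<epsilon> \<le> (K + 1) ^ s"
    using NM_le_grid_bound[OF assms(1,2)] unfolding s_def by blast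
  define C where "C = 2 * diam / \<epsilon> + 3"
  have C3: "3 \<le> C" unfolding C_def using diam_nonneg assms by simp
  have "real (K + 1) \<le> (2 * diam / \<epsilon>) * real s + 3" using K(1) by simp
  also have "\<dots> \<le> (2 * diam / \<epsilon>) * real s + 3 * real s" using s1 by simp
  also have "\<dots> = C * real s" unfolding C_def by (simp add: algebra_simps)
  finally have K1: "real (K + 1) \<le> C * real s" .
  have "real (NM f n \<epsilon>) \<le> real (K + 1) ^ s" using K(2) by (metis of_nat_le_iff of_nat_power)
  then have "ln (real (NM f n \<epsilon>)) \<le> ln (real (K + 1) ^ s)" using False by (subst ln_le_cancel_iff) auto
  also have "\<dots> = real s * ln (real (K + 1))" by (simp add: ln_realpow)
  also have "\<dots> \<le> real s * ln (C * real s)"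
    using K1 s1 by (intro mult_left_mono) (auto simp: ln_le_cancel_iff)
  also have "ln (C * real s) = ln C + ln (real s)" using C3 s1 by (intro ln_mult_pos) auto
  also have "real s * (ln C + ln (real s)) = real s * (grid_const \<epsilon> + ln (real s) - 1)"
    unfolding grid_const_def C_def by simp
  also have "\<dots> \<le> real s * (grid_const \<epsilon> + ln (real s))" using s1 by (intro mult_left_mono) auto
  finally show ?thesis .
qed

lemma ln_ln_NM_le:
  assumes "0 < n" "0 < \<epsilon>"
  defines "s \<equiv> span_num f n (\<epsilon>/2)"
  shows "ln (ln (real (NM f n \<epsilon>))) \<le> ln (real s) + ln (grid_const \<epsilon> + ln (real s))"
proof -
  have s1: "1 \<le> s" unfolding s_def using span_num_pos assms by simp
  have c1: "1 \<le> grid_const \<epsilon> + ln (real s)" using grid_const_ge[OF assms(2)] ln_of_nat_nonneg[of s] by linarith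
  show ?thesis
  proof (cases "NM f n \<epsilon> \<le> 1")
    case True
    then have "ln (ln (real (NM f n \<epsilon>))) = 0" by (cases "NM f n \<epsilon>") auto
    then show ?thesis using s1 c1 by simp
  next
    case False
    then have "0 < ln (real (NM f n \<epsilon>))" by simp
    then have "ln (ln (real (NM f n \<epsilon>))) \<le> ln (real s * (grid_const \<epsilon> + ln (real s)))"
      using ln_NM_le[OF assms(1,2)] unfolding s_def by (subst ln_le_cancel_iff) auto
    also have "\<dots> = ln (real s) + ln (grid_const \<epsilon> + ln (real s))" using s1 c1 by (intro ln_mult_pos) auto
    finally show ?thesis .
  qed
qed

lemma NM_tendsto: "((\<lambda>\<epsilon>. liminf (\<lambda>n. ereal (ln (ln (real (NM f n \<epsilon>))) / real n))) \<longlongrightarrow> h_top f) (at_right 0)"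
proof (rule tendsto_h_top_squeeze[of 64 "1/2" 1])
  fix \<epsilon> :: real assume e: "0 < \<epsilon>" "\<epsilon> < 1"
  have "lower_rate (64*\<epsilon>) = liminf (\<lambda>n. ereal ((ln (real (span_num f n (64*\<epsilon>))) - 4) / real n))"
    unfolding lower_rate_def by (rule liminf_add_const_over_n[of _ "-4", simplified, symmetric])
  also have "\<dots> \<le> liminf (\<lambda>n. ereal (ln (ln (real (NM f n \<epsilon>))) / real n))"
    by (intro Liminf_mono eventually_sequentiallyI[of 1]) (use ln_ln_NM_ge e in \<open>auto intro!: divide_right_mono\<close>)
  finally show "lower_rate (64*\<epsilon>) \<le> liminf (\<lambda>n. ereal (ln (ln (real (NM f n \<epsilon>))) / real n))" .
  have "liminf (\<lambda>n. ereal (ln (ln (real (NM f n \<epsilon>))) / real n))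
      \<le> liminf (\<lambda>n. ereal ((ln (real (span_num f n (\<epsilon>/2))) + ln (grid_const \<epsilon> + ln (real (span_num f n (\<epsilon>/2))))) / real n))"
    by (intro Liminf_mono eventually_sequentiallyI[of 1]) (use ln_ln_NM_le e in \<open>auto intro!: divide_right_mono\<close>)
  also have "\<dots> \<le> liminf (\<lambda>n. ereal (ln (real (span_num f n (\<epsilon>/2))) / real n))"
    by (rule liminf_add_ln_le) (use grid_const_ge e ln_of_nat_nonneg in auto)
  also have "\<dots> = lower_rate (1/2*\<epsilon>)" unfolding lower_rate_def by simp
  finally show "liminf (\<lambda>n. ereal (ln (ln (real (NM f n \<epsilon>))) / real n)) \<le> lower_rate (1/2*\<epsilon>)" .
qed auto

end

theorem mainTheorem18:
  fixes f :: "'a::metric_space \<Rightarrow> 'a"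
  assumes "compact (UNIV :: 'a set)"
    and "continuous_on UNIV f"
  shows "((\<lambda>\<epsilon>::real. liminf (\<lambda>n. ereal (ln (ln (real (NM f n \<epsilon>))) / real n)))
            \<longlongrightarrow> h_top f) (at_right 0) \<and>
         ((\<lambda>\<epsilon>::real. liminf (\<lambda>n. ereal (ln (ln (real (NK f n \<epsilon>))) / real n)))
            \<longlongrightarrow> h_top f) (at_right 0)"
proof -
  interpret compact_dynamics f using assms by unfold_locales
  show ?thesis using NM_tendsto NK_tendsto by simp
qed

end
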